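(* Let $U\neq0$, $3\le k<\lfloor L/2\rfloor$, and let $F_k$ be a $k$-local conserved quantity of the one-dimensional Hubbard model. For a $k$-support basis element $q=(e_{i,\uparrow}\cdots e_{i+k-1,\uparrow})(e_{i,\downarrow}\cdots e_{i+k-1,\downarrow})$ starting at site $i$, let $c_i(q)$ be its coefficient in $F_k$. If $(e_{i+1,\uparrow},e_{i+1,\downarrow})\neq(I,I)$, then $c_i(q)=0$.
   Context: Fermionic operators $c_{j,\sigma},c^\dagger_{j,\sigma}$, $j\in\{1,\dots,L\}$ with indices modulo $L$ (periodic boundary conditions), $\sigma\in\{\uparrow,\downarrow\}$, with canonical anticommutation relations; $n_{j,\sigma}=c^\dagger_{j,\sigma}c_{j,\sigma}$, $z_{j,\sigma}=2n_{j,\sigma}-1$. Hubbard Hamiltonian: $H=-2\sum_j\sum_\sigma(c^\dagger_{j,\sigma}c_{j+1,\sigma}+c^\dagger_{j+1,\sigma}c_{j,\sigma})+4U\sum_j(n_{j,\uparrow}-\tfrac12)(n_{j,\downarrow}-\tfrac12)$. An $l$-support basis element starting at site $i$ is $(e_{i,\uparrow}\cdots e_{i+l-1,\uparrow})(e_{i,\downarrow}\cdots e_{i+l-1,\downarrow})$ with $e_{j,\sigma}\in\{c_{j,\sigma},c^\dagger_{j,\sigma},z_{j,\sigma},I\}$, $(e_{i,\uparrow},e_{i,\downarrow})\neq(I,I)$, $(e_{i+l-1,\uparrow},e_{i+l-1,\downarrow})\neq(I,I)$. A $k$-local conserved quantity is $F_k=\sum_{l=1}^k\sum_{i=1}^L\sum_e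 c_e\,e$ (inner sum over $l$-support basis elements starting at $i$) with $[F_k,H]=0$ and some nonzero coefficient on a $k$-support basis element; $c_i(q)$ denotes the coefficient of $q$ in this expansion. *)

theory Defs
  imports Complex_Main
begin

text \<open>Fock space of 2L fermionic modes. Fock basis vectors are the subsets
  of {0..<2L} (occupied modes). An operator is represented by its matrix
  A T S = <T| A |S>. Fermionic operators via the Jordan-Wigner construction.\<close>

datatype spin = Up | Dn

datatype loc = Cm | Cd | Zm | Im

type_synonym op = "nat set \<Rightarrow> nat set \<Rightarrow> complex"

definition modes :: "nat \<Rightarrow> nat set" where
  "modes L = {0..<2*L}"

definition mode :: "nat \<Rightarrow> nat \<Rightarrow> spin \<Rightarrow> nat" where
  "mode L j s = 2 * (j mod L) + (case s of Up \<Rightarrow> 0 | Dn \<Rightarrow> 1)"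

definition jw_sign :: "nat \<Rightarrow> nat set \<Rightarrow> complex" where
  "jw_sign m S = (-1) ^ card {m' \<in> S. m' < m}"

definition ann :: "nat \<Rightarrow> op" where
  "ann m = (\<lambda>T S. if m \<in> S \<and> T = S - {m} then jw_sign m S else 0)"

definition cre :: "nat \<Rightarrow> op" where
  "cre m = (\<lambda>T S. if m \<notin> S \<and> T = insert m S then jw_sign m S else 0)"

definition idop :: op where
  "idop = (\<lambda>T S. if T = S then 1 else 0)"

definition opmul :: "nat \<Rightarrow> op \<Rightarrow> op \<Rightarrow> op" where
  "opmul L A B = (\<lambda>T S. \<Sum>R\<in>Pow (modes L). A T R * B R S)"

definition cop :: "nat \<Rightarrow> nat \<Rightarrow> spin \<Rightarrow> op" where
  "cop L j s = ann (mode L j s)"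

definition cdag :: "nat \<Rightarrow> nat \<Rightarrow> spin \<Rightarrow> op" where
  "cdag L j s = cre (mode L j s)"

definition nop :: "nat \<Rightarrow> nat \<Rightarrow> spin \<Rightarrow> op" where
  "nop L j s = opmul L (cdag L j s) (cop L j s)"

definition zop :: "nat \<Rightarrow> nat \<Rightarrow> spin \<Rightarrow> op" where
  "zop L j s = (\<lambda>T S. 2 * nop L j s T S - idop T S)"

definition hubbard :: "nat \<Rightarrow> real \<Rightarrow> op" where
  "hubbard L U = (\<lambda>T S.
     -2 * (\<Sum>j<L. \<Sum>s\<in>{Up, Dn}.
             opmul L (cdag L j s) (cop L (j+1) s) T S + opmul L (cdag L (j+1) s) (cop L j s) T S)
     + 4 * complex_of_real U * (\<Sum>j<L.
             opmul L (\<lambda>T' S'. nop L j Up T' S' - idop T' S' / 2)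
                     (\<lambda>T' S'. nop L j Dn T' S' - idop T' S' / 2) T S))"

definition loc_op :: "nat \<Rightarrow> loc \<Rightarrow> nat \<Rightarrow> spin \<Rightarrow> op" where
  "loc_op L e j s = (case e of Cm \<Rightarrow> cop L j s | Cd \<Rightarrow> cdag L j s | Zm \<Rightarrow> zop L j s | Im \<Rightarrow> idop)"

fun chain :: "nat \<Rightarrow> nat \<Rightarrow> spin \<Rightarrow> loc list \<Rightarrow> op" where
  "chain L i s [] = idop"
| "chain L i s (e # es) = opmul L (loc_op L e i s) (chain L (Suc i) s es)"

definition basis_elem :: "nat \<Rightarrow> nat \<Rightarrow> (loc \<times> loc) list \<Rightarrow> op" where
  "basis_elem L i es = opmul L (chain L i Up (map fst es)) (chain L i Dn (map snd es))"

definition all_locs :: "(loc \<times> loc) set" where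
  "all_locs = {Cm, Cd, Zm, Im} \<times> {Cm, Cd, Zm, Im}"

definition supp_elems :: "nat \<Rightarrow> (loc \<times> loc) list set" where
  "supp_elems l = {es. set es \<subseteq> all_locs \<and> length es = l \<and> 1 \<le> l
                       \<and> hd es \<noteq> (Im, Im) \<and> last es \<noteq> (Im, Im)}"

definition local_sum :: "nat \<Rightarrow> nat \<Rightarrow> (nat \<Rightarrow> (loc \<times> loc) list \<Rightarrow> complex) \<Rightarrow> op" where
  "local_sum L k c = (\<lambda>T S. \<Sum>l\<in>{1..k}. \<Sum>i<L. \<Sum>es\<in>supp_elems l. c i es * basis_elem L i es T S)"

definition commutes :: "nat \<Rightarrow> op \<Rightarrow> op \<Rightarrow> bool" where
  "commutes L A B \<longleftrightarrow> (\<forall>T\<in>Pow (modes L). \<forall>S\<in>Pow (modes L). opmul L A B T S = opmul L B A T S)"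

definition k_local_conserved :: "nat \<Rightarrow> real \<Rightarrow> nat \<Rightarrow> (nat \<Rightarrow> (loc \<times> loc) list \<Rightarrow> complex) \<Rightarrow> bool" where
  "k_local_conserved L U k c \<longleftrightarrow>
     commutes L (local_sum L k c) (hubbard L U) \<and>
     (\<exists>i<L. \<exists>es\<in>supp_elems k. c i es \<noteq> 0)"

end

theory Submission
  imports Defs
begin

text \<open>Operators on the Fock space are represented by words, products of single-mode factors
  \<open>c\<close>, \<open>c\<^sup>\<dagger>\<close>, \<open>z\<close>. A word maps each basis state to a multiple of a single basis state, and two
  words with at most one factor per mode are orthogonal for the pairing \<open>tr(A\<^sup>T B)\<close> as soon as
  their factors differ at some mode. Pairing \<open>[F\<^sub>k, H] = 0\<close> with a fixed word therefore yields a
  linear relation among the coefficients of \<open>F\<^sub>k\<close>, involving only the basis elements whose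
  commutator with \<open>H\<close> contains that word.

  For the \<open>k\<close>-support element \<open>q\<close> at site \<open>i\<close> we pair with the probe, the \<open>k + 1\<close>-support word
  produced in \<open>[q, H]\<close> when the last factor of \<open>q\<close> in some spin hops one site to the right. An
  element of support at most \<open>k\<close> cannot reach both end sites \<open>i\<close> and \<open>i + k\<close> of the probe (as
  \<open>2 k < L\<close>), so it contributes only through a hop across one end. At the right end only \<open>q\<close>
  itself contributes, with nonzero weight. At the left end only elements starting at site \<open>i + 1\<close>
  contribute, and only if the first site of \<open>q\<close> carries a single fermion. Hence the coefficients of
  elements whose first site does not carry a single fermion vanish. When the first site of \<open>q\<close>
  does carry one, each left-end element either is of that kind or has a single fermion on its own
  first site, and then its hop leaves empty a mode at which the probe is nontrivial because the
  second site of \<open>q\<close> is.\<close>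

section \<open>Words and the operators they denote\<close>

type_synonym word = "(nat \<times> loc) list"

text \<open>A word \<open>[(m\<^sub>1, e\<^sub>1), \<dots>, (m\<^sub>n, e\<^sub>n)]\<close> stands for the operator product
  \<open>e\<^sub>1(m\<^sub>1) \<cdots> e\<^sub>n(m\<^sub>n)\<close> of single-mode factors. Each factor maps a Fock basis vector to a
  multiple of one basis vector, so a word acts by a state map together with an amplitude,
  the rightmost factor acting first.\<close>

fun fermionic :: "loc \<Rightarrow> bool" where
  "fermionic Cm = True" | "fermionic Cd = True" | "fermionic Zm = False" | "fermionic Im = False"

fun loc_step :: "loc \<Rightarrow> nat \<Rightarrow> nat set \<Rightarrow> nat set" where
  "loc_step Cm m S = S - {m}"
| "loc_step Cd m S = insert m S"
| "loc_step Zm m S = S"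
| "loc_step Im m S = S"

fun loc_amp :: "loc \<Rightarrow> nat \<Rightarrow> nat set \<Rightarrow> complex" where
  "loc_amp Cm m S = (if m \<in> S then jw_sign m S else 0)"
| "loc_amp Cd m S = (if m \<notin> S then jw_sign m S else 0)"
| "loc_amp Zm m S = (if m \<in> S then 1 else -1)"
| "loc_amp Im m S = 1"

fun word_state :: "word \<Rightarrow> nat set \<Rightarrow> nat set" where
  "word_state [] S = S"
| "word_state (p # W) S = loc_step (snd p) (fst p) (word_state W S)"

fun word_amp :: "word \<Rightarrow> nat set \<Rightarrow> complex" where
  "word_amp [] S = 1"
| "word_amp (p # W) S = loc_amp (snd p) (fst p) (word_state W S) * word_amp W S"

definition word_op :: "word \<Rightarrow> op" where
  "word_op W = (\<lambda>T S. if T = word_state W S then word_amp W S else 0)"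

definition word_in_modes :: "nat \<Rightarrow> word \<Rightarrow> bool" where
  "word_in_modes L W \<longleftrightarrow> (\<forall>p\<in>set W. fst p < 2 * L)"

definition fock_eq :: "nat \<Rightarrow> op \<Rightarrow> op \<Rightarrow> bool" where
  "fock_eq L A B \<longleftrightarrow> (\<forall>T\<in>Pow (modes L). \<forall>S\<in>Pow (modes L). A T S = B T S)"

text \<open>The bilinear (not sesquilinear) pairing \<open>tr(A\<^sup>T B)\<close> on the Fock space.\<close>

definition trace_pairing :: "nat \<Rightarrow> op \<Rightarrow> op \<Rightarrow> complex" where
  "trace_pairing L A B = (\<Sum>T\<in>Pow (modes L). \<Sum>S\<in>Pow (modes L). A T S * B T S)"

lemma word_state_append [simp]: "word_state (A @ B) S = word_state A (word_state B S)"
  by (induction A) auto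

lemma word_amp_append [simp]: "word_amp (A @ B) S = word_amp A (word_state B S) * word_amp B S"
  by (induction A) auto

lemma word_in_modes_Nil [simp]: "word_in_modes L []"
  by (simp add: word_in_modes_def)

lemma word_in_modes_Cons [simp]: "word_in_modes L (p # W) \<longleftrightarrow> fst p < 2 * L \<and> word_in_modes L W"
  by (simp add: word_in_modes_def)

lemma word_in_modes_append [simp]:
  "word_in_modes L (A @ B) \<longleftrightarrow> word_in_modes L A \<and> word_in_modes L B"
  by (auto simp: word_in_modes_def)

lemma word_in_modes_filter: "word_in_modes L W \<Longrightarrow> word_in_modes L (filter P W)"
  by (auto simp: word_in_modes_def)

lemma finite_modes [simp]: "finite (modes L)"
  by (simp add: modes_def)

lemma word_state_Pow:
  assumes "word_in_modes L W" "S \<in> Pow (modes L)"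
  shows "word_state W S \<in> Pow (modes L)"
  using assms
proof (induction W)
  case (Cons p W)
  then show ?case by (cases "snd p") (auto simp: modes_def)
qed simp

lemma finite_word_state: "finite S \<Longrightarrow> finite (word_state W S)"
proof (induction W)
  case (Cons p W)
  then show ?case by (cases "snd p") auto
qed simp

lemma jw_sign_square: "jw_sign m S * jw_sign m S = 1"
  by (simp add: jw_sign_def flip: power_add)

lemma jw_sign_insert_self [simp]: "jw_sign m (insert m S) = jw_sign m S"
  unfolding jw_sign_def by (rule arg_cong[where f = "\<lambda>A. (-1) ^ card A"]) auto

lemma jw_sign_remove_self [simp]: "jw_sign m (S - {m}) = jw_sign m S"
  unfolding jw_sign_def by (rule arg_cong[where f = "\<lambda>A. (-1) ^ card A"]) auto

lemma jw_sign_nonzero [simp]: "jw_sign m S \<noteq> 0"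
  by (simp add: jw_sign_def)

lemma opmul_word_op:
  assumes "word_in_modes L B" "S \<in> Pow (modes L)"
  shows "opmul L (word_op A) (word_op B) T S = word_op (A @ B) T S"
proof -
  have "opmul L (word_op A) (word_op B) T S
      = (\<Sum>R\<in>Pow (modes L). if R = word_state B S then word_op A T R * word_amp B S else 0)"
    unfolding opmul_def by (intro sum.cong) (auto simp: word_op_def)
  also have "\<dots> = word_op A T (word_state B S) * word_amp B S"
    using word_state_Pow[OF assms] by simp
  finally show ?thesis by (simp add: word_op_def)
qed

lemma opmul_cong:
  assumes "fock_eq L A A'" "fock_eq L B B'" "T \<in> Pow (modes L)" "S \<in> Pow (modes L)"
  shows "opmul L A B T S = opmul L A' B' T S"
  unfolding opmul_def using assms by (auto intro!: sum.cong simp: fock_eq_def)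

lemma opmul_fock_eq_word_op:
  assumes "fock_eq L A (word_op V)" "fock_eq L B (word_op W)" "word_in_modes L W"
  shows "fock_eq L (opmul L A B) (word_op (V @ W))"
  unfolding fock_eq_def using opmul_cong[OF assms(1,2)] opmul_word_op[OF assms(3)] by auto

lemma opmul_scale_left: "opmul L (\<lambda>T S. a * A T S) B T S = a * opmul L A B T S"
  unfolding opmul_def by (simp add: sum_distrib_left algebra_simps)

lemma opmul_scale_right: "opmul L A (\<lambda>T S. a * B T S) T S = a * opmul L A B T S"
  unfolding opmul_def by (simp add: sum_distrib_left algebra_simps)

lemma opmul_add_left: "opmul L (\<lambda>T S. A T S + B T S) C T S = opmul L A C T S + opmul L B C T S"
  unfolding opmul_def by (simp add: sum.distrib algebra_simps)

lemma opmul_add_right: "opmul L A (\<lambda>T S. B T S + C T S) T S = opmul L A B T S + opmul L A C T S"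
  unfolding opmul_def by (simp add: sum.distrib algebra_simps)

lemma opmul_sum_left: "opmul L (\<lambda>T S. \<Sum>x\<in>X. f x T S) B T S = (\<Sum>x\<in>X. opmul L (f x) B T S)"
  unfolding opmul_def by (simp add: sum_distrib_right) (rule sum.swap)

lemma opmul_sum_right: "opmul L A (\<lambda>T S. \<Sum>x\<in>X. f x T S) T S = (\<Sum>x\<in>X. opmul L A (f x) T S)"
  unfolding opmul_def by (simp add: sum_distrib_left) (rule sum.swap)

lemma trace_pairing_cong:
  assumes "\<And>T S. T \<in> Pow (modes L) \<Longrightarrow> S \<in> Pow (modes L) \<Longrightarrow> B T S = C T S"
  shows "trace_pairing L A B = trace_pairing L A C"
  unfolding trace_pairing_def using assms by (auto intro!: sum.cong)

lemma trace_pairing_zero [simp]: "trace_pairing L A (\<lambda>T S. 0) = 0"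
  by (simp add: trace_pairing_def)

lemma trace_pairing_scale: "trace_pairing L A (\<lambda>T S. a * B T S) = a * trace_pairing L A B"
  unfolding trace_pairing_def by (simp add: sum_distrib_left algebra_simps)

lemma trace_pairing_add:
  "trace_pairing L A (\<lambda>T S. B T S + C T S) = trace_pairing L A B + trace_pairing L A C"
  unfolding trace_pairing_def by (simp add: sum.distrib algebra_simps)

lemma trace_pairing_diff:
  "trace_pairing L A (\<lambda>T S. B T S - C T S) = trace_pairing L A B - trace_pairing L A C"
  unfolding trace_pairing_def by (simp add: sum_subtractf algebra_simps)

lemma trace_pairing_sum:
  "trace_pairing L A (\<lambda>T S. \<Sum>x\<in>X. f x T S) = (\<Sum>x\<in>X. trace_pairing L A (f x))"
proof -
  have "trace_pairing L A (\<lambda>T S. \<Sum>x\<in>X. f x T S)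
      = (\<Sum>T\<in>Pow (modes L). \<Sum>x\<in>X. \<Sum>S\<in>Pow (modes L). A T S * f x T S)"
    unfolding trace_pairing_def sum_distrib_left by (intro sum.cong refl sum.swap)
  also have "\<dots> = (\<Sum>x\<in>X. trace_pairing L A (f x))"
    unfolding trace_pairing_def by (rule sum.swap)
  finally show ?thesis .
qed

lemma trace_pairing_word_op:
  assumes "word_in_modes L A"
  shows "trace_pairing L (word_op A) (word_op B) =
    (\<Sum>S\<in>Pow (modes L). if word_state A S = word_state B S then word_amp A S * word_amp B S else 0)"
proof -
  have "trace_pairing L (word_op A) (word_op B)
      = (\<Sum>S\<in>Pow (modes L). \<Sum>T\<in>Pow (modes L). word_op A T S * word_op B T S)"
    unfolding trace_pairing_def by (rule sum.swap)
  also have "\<dots> = (\<Sum>S\<in>Pow (modes L).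
      if word_state A S = word_state B S then word_amp A S * word_amp B S else 0)"
  proof (rule sum.cong[OF refl])
    fix S assume "S \<in> Pow (modes L)"
    then have "word_state A S \<in> Pow (modes L)" using word_state_Pow[OF assms] by blast
    moreover have "word_op A T S * word_op B T S = (if T = word_state A S then
        (if word_state A S = word_state B S then word_amp A S * word_amp B S else 0) else 0)" for T
      by (auto simp: word_op_def)
    ultimately show "(\<Sum>T\<in>Pow (modes L). word_op A T S * word_op B T S) =
        (if word_state A S = word_state B S then word_amp A S * word_amp B S else 0)"
      by simp
  qed
  finally show ?thesis .
qed

lemma mode_less:
  assumes "0 < L"
  shows "mode L j s < 2 * L"
proof -
  have "j mod L < L" using assms by simp
  then show ?thesis by (cases s) (auto simp: mode_def)
qed

lemma idop_eq_word_op: "idop = word_op []"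
  by (auto simp: idop_def word_op_def fun_eq_iff)

lemma ann_eq_word_op: "ann m = word_op [(m, Cm)]"
  by (auto simp: ann_def word_op_def fun_eq_iff)

lemma cre_eq_word_op: "cre m = word_op [(m, Cd)]"
  by (auto simp: cre_def word_op_def fun_eq_iff)

lemma opmul_cre_ann:
  assumes "m < 2 * L" "S \<in> Pow (modes L)"
  shows "opmul L (cre m) (ann m) T S = (if T = S \<and> m \<in> S then 1 else 0)"
  using opmul_word_op[of L "[(m, Cm)]" S "[(m, Cd)]" T] assms
  by (auto simp: cre_eq_word_op ann_eq_word_op word_op_def jw_sign_square insert_absorb)

lemma zop_eq_word_op:
  assumes "0 < L" "S \<in> Pow (modes L)"
  shows "zop L j s T S = word_op [(mode L j s, Zm)] T S"
  using opmul_cre_ann[OF mode_less[OF assms(1)] assms(2)]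
  by (auto simp: zop_def nop_def cdag_def cop_def idop_def word_op_def)

lemma loc_op_eq_word_op:
  assumes "0 < L" "S \<in> Pow (modes L)"
  shows "loc_op L e j s T S = word_op [(mode L j s, e)] T S"
  using zop_eq_word_op[OF assms]
  by (cases e) (auto simp: loc_op_def cop_def cdag_def ann_eq_word_op cre_eq_word_op idop_eq_word_op
      word_op_def)

definition chain_word :: "nat \<Rightarrow> nat \<Rightarrow> spin \<Rightarrow> loc list \<Rightarrow> word" where
  "chain_word L i s es = map (\<lambda>t. (mode L (i + t) s, es ! t)) [0..<length es]"

lemma chain_word_Nil [simp]: "chain_word L i s [] = []"
  by (simp add: chain_word_def)

lemma chain_word_Cons: "chain_word L i s (e # es) = (mode L i s, e) # chain_word L (Suc i) s es"
  unfolding chain_word_def by (simp add: map_upt_Suc del: upt_Suc)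

lemma word_in_modes_chain_word: "0 < L \<Longrightarrow> word_in_modes L (chain_word L i s es)"
  by (auto simp: word_in_modes_def chain_word_def mode_less)

lemma chain_fock_eq: "0 < L \<Longrightarrow> fock_eq L (chain L i s es) (word_op (chain_word L i s es))"
proof (induction es arbitrary: i)
  case Nil
  then show ?case by (simp add: fock_eq_def idop_eq_word_op)
next
  case (Cons e es)
  have "fock_eq L (loc_op L e i s) (word_op [(mode L i s, e)])"
    using loc_op_eq_word_op[OF Cons.prems] by (simp add: fock_eq_def)
  from opmul_fock_eq_word_op[OF this Cons.IH[OF Cons.prems] word_in_modes_chain_word[OF Cons.prems]]
  show ?case by (simp add: chain_word_Cons)
qed

definition basis_word :: "nat \<Rightarrow> nat \<Rightarrow> (loc \<times> loc) list \<Rightarrow> word" where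
  "basis_word L i es =
     filter (\<lambda>p. snd p \<noteq> Im) (chain_word L i Up (map fst es) @ chain_word L i Dn (map snd es))"

lemma word_state_filter_Im: "word_state (filter (\<lambda>p. snd p \<noteq> Im) W) S = word_state W S"
  by (induction W) auto

lemma word_amp_filter_Im: "word_amp (filter (\<lambda>p. snd p \<noteq> Im) W) S = word_amp W S"
  by (induction W) (auto simp: word_state_filter_Im)

lemma word_op_filter_Im: "word_op (filter (\<lambda>p. snd p \<noteq> Im) W) = word_op W"
  by (simp add: word_op_def word_state_filter_Im word_amp_filter_Im fun_eq_iff)

lemma word_in_modes_basis_word: "0 < L \<Longrightarrow> word_in_modes L (basis_word L i es)"
  by (auto simp: basis_word_def intro!: word_in_modes_filter word_in_modes_chain_word)

lemma basis_word_nontrivial: "p \<in> set (basis_word L i es) \<Longrightarrow> snd p \<noteq> Im"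
  by (auto simp: basis_word_def)

lemma basis_elem_fock_eq: "0 < L \<Longrightarrow> fock_eq L (basis_elem L i es) (word_op (basis_word L i es))"
  unfolding basis_elem_def basis_word_def word_op_filter_Im
  by (rule opmul_fock_eq_word_op[OF chain_fock_eq chain_fock_eq word_in_modes_chain_word])

definition hop_word :: "nat \<Rightarrow> nat \<Rightarrow> spin \<Rightarrow> word" where
  "hop_word L j s = [(mode L j s, Cd), (mode L (j + 1) s, Cm)]"

definition hop_word' :: "nat \<Rightarrow> nat \<Rightarrow> spin \<Rightarrow> word" where
  "hop_word' L j s = [(mode L (j + 1) s, Cd), (mode L j s, Cm)]"

definition interaction_word :: "nat \<Rightarrow> nat \<Rightarrow> word" where
  "interaction_word L j = [(mode L j Up, Zm), (mode L j Dn, Zm)]"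

definition hubbard_words :: "nat \<Rightarrow> real \<Rightarrow> op" where
  "hubbard_words L U = (\<lambda>T S. \<Sum>j<L.
     (\<Sum>s\<in>{Up, Dn}. -2 * (word_op (hop_word L j s) T S + word_op (hop_word' L j s) T S))
     + complex_of_real U * word_op (interaction_word L j) T S)"

lemma word_in_modes_hop_word: "0 < L \<Longrightarrow> word_in_modes L (hop_word L j s)"
  and word_in_modes_hop_word': "0 < L \<Longrightarrow> word_in_modes L (hop_word' L j s)"
  and word_in_modes_interaction_word: "0 < L \<Longrightarrow> word_in_modes L (interaction_word L j)"
  by (simp_all add: hop_word_def hop_word'_def interaction_word_def mode_less)

lemma hubbard_fock_eq:
  assumes "0 < L"
  shows "fock_eq L (hubbard L U) (hubbard_words L U)"
  unfolding fock_eq_def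
proof (intro ballI)
  fix T S assume TS: "T \<in> Pow (modes L)" "S \<in> Pow (modes L)"
  have hop: "opmul L (cdag L j s) (cop L (Suc j) s) T S = word_op (hop_word L j s) T S"
    "opmul L (cdag L (Suc j) s) (cop L j s) T S = word_op (hop_word' L j s) T S" for j s
    using opmul_word_op[of L "[(mode L (j + 1) s, Cm)]" S "[(mode L j s, Cd)]" T]
      opmul_word_op[of L "[(mode L j s, Cm)]" S "[(mode L (j + 1) s, Cd)]" T] assms TS
    by (simp_all add: cdag_def cop_def cre_eq_word_op ann_eq_word_op hop_word_def hop_word'_def
        mode_less)
  have half_z: "(\<lambda>T S. nop L j s T S - idop T S / 2) = (\<lambda>T S. 1/2 * zop L j s T S)" for j s
    by (auto simp: zop_def fun_eq_iff)
  have int: "opmul L (\<lambda>T S. nop L j Up T S - idop T S / 2) (\<lambda>T S. nop L j Dn T S - idop T S / 2) T S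
      = 1/4 * word_op (interaction_word L j) T S" for j
  proof -
    have "opmul L (zop L j Up) (zop L j Dn) T S
        = opmul L (word_op [(mode L j Up, Zm)]) (word_op [(mode L j Dn, Zm)]) T S"
      by (rule opmul_cong) (use assms TS zop_eq_word_op in \<open>auto simp: fock_eq_def\<close>)
    also have "\<dots> = word_op (interaction_word L j) T S"
      using opmul_word_op[of L "[(mode L j Dn, Zm)]" S "[(mode L j Up, Zm)]" T] assms TS
      by (simp add: interaction_word_def mode_less)
    finally show ?thesis
      unfolding half_z opmul_scale_left opmul_scale_right by simp
  qed
  show "hubbard L U T S = hubbard_words L U T S"
    unfolding hubbard_def hubbard_words_def
    by (simp add: hop int sum.distrib sum_distrib_left sum_negf sum_subtractf algebra_simps)
qed

section \<open>Orthogonality of words\<close>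

definition factors_at :: "word \<Rightarrow> nat \<Rightarrow> loc list" where
  "factors_at W m = map snd (filter (\<lambda>p. fst p = m \<and> snd p \<noteq> Im) W)"

definition factor_at :: "word \<Rightarrow> nat \<Rightarrow> loc" where
  "factor_at W m = (case factors_at W m of [] \<Rightarrow> Im | e # _ \<Rightarrow> e)"

definition simple_word :: "word \<Rightarrow> bool" where
  "simple_word W \<longleftrightarrow> (\<forall>m. length (factors_at W m) \<le> 1)"

definition no_fermion_at :: "word \<Rightarrow> nat \<Rightarrow> bool" where
  "no_fermion_at W m \<longleftrightarrow> (\<forall>p\<in>set W. fst p = m \<longrightarrow> \<not> fermionic (snd p))"

definition toggle :: "nat set \<Rightarrow> nat \<Rightarrow> nat set" where
  "toggle A x = (if x \<in> A then A - {x} else insert x A)"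

fun parity_set :: "word \<Rightarrow> nat set" where
  "parity_set [] = {}"
| "parity_set (p # W) = (if fermionic (snd p) then toggle (parity_set W) (fst p) else parity_set W)"

fun jw_string_sign :: "word \<Rightarrow> nat \<Rightarrow> complex" where
  "jw_string_sign [] m = 1"
| "jw_string_sign (p # W) m = (if fermionic (snd p) \<and> m < fst p then -1 else 1) * jw_string_sign W m"

definition z_count :: "word \<Rightarrow> nat \<Rightarrow> nat" where
  "z_count W m = length (filter (\<lambda>p. p = (m, Zm)) W)"

lemma factors_at_Nil [simp]: "factors_at [] m = []"
  by (simp add: factors_at_def)

lemma factors_at_Cons:
  "factors_at (p # W) m = (if fst p = m \<and> snd p \<noteq> Im then [snd p] else []) @ factors_at W m"
  by (simp add: factors_at_def)

lemma factors_at_append [simp]: "factors_at (A @ B) m = factors_at A m @ factors_at B m"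
  by (simp add: factors_at_def)

lemma factor_at_eq_Im_iff: "factor_at W m = Im \<longleftrightarrow> factors_at W m = []"
proof -
  have "Im \<notin> set (factors_at W m)" by (auto simp: factors_at_def)
  then show ?thesis by (cases "factors_at W m") (auto simp: factor_at_def)
qed

lemma factor_at_if_Nil: "factors_at W m = [] \<Longrightarrow> factor_at W m = Im"
  by (simp add: factor_at_def)

lemma factor_at_append:
  "factor_at (A @ B) m = (if factors_at A m = [] then factor_at B m else factor_at A m)"
  by (cases "factors_at A m") (auto simp: factor_at_def)

lemma factor_in_factors_at: "p \<in> set W \<Longrightarrow> snd p \<noteq> Im \<Longrightarrow> snd p \<in> set (factors_at W (fst p))"
  by (force simp: factors_at_def)

lemma factors_at_eq_Nil_iff:
  "(\<forall>p\<in>set W. snd p \<noteq> Im) \<Longrightarrow> factors_at W m = [] \<longleftrightarrow> (\<forall>p\<in>set W. fst p \<noteq> m)"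
  by (auto simp: factors_at_def filter_empty_conv)

lemma factors_at_single:
  "length (factors_at W m) \<le> 1 \<Longrightarrow> factors_at W m = [] \<or> factors_at W m = [factor_at W m]"
  unfolding factor_at_def by (cases "factors_at W m" rule: list.exhaust) simp_all

lemma simple_word_factors_at: "simple_word W \<Longrightarrow> length (factors_at W m) \<le> 1"
  by (simp add: simple_word_def)

lemma factor_at_out_of_modes: "word_in_modes L W \<Longrightarrow> \<not> m < 2 * L \<Longrightarrow> factor_at W m = Im"
  by (auto simp: factor_at_eq_Im_iff factors_at_def word_in_modes_def filter_empty_conv)

lemma simple_word_split:
  assumes "simple_word (U @ [(x, e)] @ V)" "\<forall>p\<in>set (U @ V). snd p \<noteq> Im" "e \<noteq> Im"
  shows "\<forall>p\<in>set (U @ V). fst p \<noteq> x"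
proof
  fix p assume p: "p \<in> set (U @ V)"
  show "fst p \<noteq> x"
  proof
    assume "fst p = x"
    then have "snd p \<in> set (factors_at (U @ V) x)" using factor_in_factors_at[OF p] assms(2) p by auto
    then have "2 \<le> length (factors_at (U @ [(x, e)] @ V) x)" using assms(3)
      by (cases "factors_at U x"; cases "factors_at V x") (auto simp: factors_at_Cons)
    then show False using assms(1) by (simp add: simple_word_def) (metis not_less_eq_eq numeral_2_eq_2)
  qed
qed

lemma split_at_factor:
  assumes "factor_at W m = e" "e \<noteq> Im"
  obtains U V where "W = U @ [(m, e)] @ V"
proof -
  obtain es where "factors_at W m = e # es"
    using assms by (cases "factors_at W m") (auto simp: factor_at_def)
  then have "e \<in> set (factors_at W m)" by simp
  then have "(m, e) \<in> set W" by (auto simp: factors_at_def)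
  then show thesis using that split_list by fastforce
qed

lemma fermionic_nontrivial: "fermionic e \<Longrightarrow> e \<noteq> Im"
  by (cases e) auto

lemma no_fermion_at_if_no_fermionic_factor:
  "\<forall>e\<in>set (factors_at W m). \<not> fermionic e \<Longrightarrow> no_fermion_at W m"
  unfolding no_fermion_at_def factors_at_def using fermionic_nontrivial by fastforce

lemma no_fermion_at_single:
  "length (factors_at W m) \<le> 1 \<Longrightarrow> \<not> fermionic (factor_at W m) \<Longrightarrow> no_fermion_at W m"
  using factors_at_single[of W m] by (auto intro: no_fermion_at_if_no_fermionic_factor)

lemma word_state_eq_sym_diff: "word_amp W S \<noteq> 0 \<Longrightarrow> word_state W S = sym_diff S (parity_set W)"
proof (induction W)
  case (Cons p W)
  obtain m e where p: "p = (m, e)" by force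
  from Cons.prems have "word_amp W S \<noteq> 0" "loc_amp e m (word_state W S) \<noteq> 0" by (auto simp: p)
  with Cons.IH show ?case by (cases e) (auto simp: p toggle_def split: if_splits)
qed simp

lemma word_state_mem_no_fermion: "no_fermion_at W m \<Longrightarrow> m \<in> word_state W S \<longleftrightarrow> m \<in> S"
proof (induction W)
  case (Cons p W)
  obtain m' e where p: "p = (m', e)" by force
  from Cons.prems have "no_fermion_at W m" "m' = m \<Longrightarrow> \<not> fermionic e"
    by (auto simp: no_fermion_at_def p)
  with Cons.IH show ?case by (cases e) (auto simp: p)
qed simp

lemma mem_if_single_fermion:
  "factors_at W m = [e] \<Longrightarrow> fermionic e \<Longrightarrow> word_amp W S \<noteq> 0 \<Longrightarrow> m \<in> S \<longleftrightarrow> e = Cm"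
proof (induction W)
  case (Cons p W)
  obtain m' e' where p: "p = (m', e')" by force
  from Cons.prems(3) have nz: "word_amp W S \<noteq> 0" "loc_amp e' m' (word_state W S) \<noteq> 0"
    by (auto simp: p)
  show ?case
  proof (cases "m' = m \<and> e' \<noteq> Im")
    case True
    with Cons.prems(1) have "e' = e" "factors_at W m = []" by (auto simp: p factors_at_Cons)
    then have "m \<in> word_state W S \<longleftrightarrow> m \<in> S"
      by (simp add: word_state_mem_no_fermion no_fermion_at_if_no_fermionic_factor)
    with nz(2) True Cons.prems(2) \<open>e' = e\<close> show ?thesis by (cases e) auto
  next
    case False
    with Cons.prems(1) have "factors_at W m = [e]" by (auto simp: p factors_at_Cons)
    from Cons.IH[OF this Cons.prems(2) nz(1)] show ?thesis .
  qed
qed simp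

lemma finite_toggle [simp]: "finite (toggle A x) \<longleftrightarrow> finite A"
  by (auto simp: toggle_def)

lemma toggle_toggle [simp]: "toggle (toggle A x) x = A"
  by (auto simp: toggle_def)

lemma toggle_eq_toggle_iff [simp]: "toggle A x = toggle B x \<longleftrightarrow> A = B"
  by (metis toggle_toggle)

lemma card_toggle_sign:
  assumes "finite A"
  shows "(-1::complex) ^ card (toggle A x) = - ((-1) ^ card A)"
proof (cases "x \<in> A")
  case True
  then obtain B where B: "A = insert x B" "x \<notin> B" by (metis Set.set_insert)
  then have "toggle A x = B" by (auto simp: toggle_def)
  then show ?thesis using B assms by simp
next
  case False
  then show ?thesis using assms by (simp add: toggle_def)
qed

lemma toggle_filter: "{y \<in> toggle A x. P y} = (if P x then toggle {y \<in> A. P y} x else {y \<in> A. P y})"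
  by (auto simp: toggle_def)

lemma jw_sign_toggle:
  assumes "finite R" "m \<noteq> m'"
  shows "jw_sign m' (toggle R m) = (if m < m' then - jw_sign m' R else jw_sign m' R)"
  using assms card_toggle_sign[of "{x \<in> R. x < m'}" m] toggle_filter[of R m "\<lambda>x. x < m'"]
  by (auto simp: jw_sign_def)

lemma word_toggle:
  assumes "finite S" "no_fermion_at W m"
  shows "word_state W (toggle S m) = toggle (word_state W S) m \<and>
    word_amp W (toggle S m) = (-1) ^ z_count W m * jw_string_sign W m * word_amp W S"
  using assms(2)
proof (induction W)
  case Nil
  then show ?case by (simp add: z_count_def)
next
  case (Cons p W)
  obtain m' e where p: "p = (m', e)" by force
  from Cons.prems have IH: "word_state W (toggle S m) = toggle (word_state W S) m \<and>
      word_amp W (toggle S m) = (-1) ^ z_count W m * jw_string_sign W m * word_amp W S"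
    and ne: "m' = m \<Longrightarrow> \<not> fermionic e"
    using Cons.IH by (auto simp: no_fermion_at_def p)
  have fin: "finite (word_state W S)" using finite_word_state[OF assms(1)] .
  have step: "loc_step e m' (toggle R m) = toggle (loc_step e m' R) m" for R
    using ne by (cases e) (auto simp: toggle_def)
  have amp: "loc_amp e m' (toggle (word_state W S) m) =
      (if e = Zm \<and> m' = m then -1 else 1) * (if fermionic e \<and> m < m' then -1 else 1) *
      loc_amp e m' (word_state W S)"
  proof (cases "fermionic e")
    case True
    with ne have "m \<noteq> m'" by auto
    with True jw_sign_toggle[OF fin this] show ?thesis by (cases e) (auto simp: toggle_def)
  qed (cases e; auto simp: toggle_def)
  have "z_count (p # W) m = (if e = Zm \<and> m' = m then Suc (z_count W m) else z_count W m)"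
    by (auto simp: z_count_def p)
  with IH step amp show ?case by (auto simp: p)
qed

lemma finite_parity_set: "finite (parity_set W)"
  by (induction W) (auto simp: toggle_def)

lemma jw_string_sign_eq: "jw_string_sign W m = (-1) ^ card {x \<in> parity_set W. m < x}"
proof (induction W)
  case (Cons p W)
  then show ?case
    using card_toggle_sign[of "{x \<in> parity_set W. m < x}" "fst p"]
      toggle_filter[of "parity_set W" "fst p" "\<lambda>x. m < x"] finite_parity_set[of W]
    by auto
qed simp

lemma mem_parity_set: "m \<in> parity_set W \<longleftrightarrow> odd (length (filter fermionic (factors_at W m)))"
proof (induction W)
  case (Cons p W)
  then show ?case by (cases "snd p") (auto simp: factors_at_Cons toggle_def)
qed simp

lemma mem_parity_set_single:
  assumes "length (factors_at W m) \<le> 1"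
  shows "m \<in> parity_set W \<longleftrightarrow> fermionic (factor_at W m)"
  using factors_at_single[OF assms]
  by (elim disjE) (simp_all add: mem_parity_set factor_at_if_Nil)

lemma z_count_single:
  assumes "length (factors_at W m) \<le> 1"
  shows "z_count W m = (if factor_at W m = Zm then 1 else 0)"
proof -
  have "z_count W m = length (filter (\<lambda>e. e = Zm) (factors_at W m))"
    by (induction W) (auto simp: z_count_def factors_at_Cons)
  with factors_at_single[OF assms] show ?thesis
    by (elim disjE) (simp_all add: factor_at_if_Nil)
qed

lemma sum_Pow_toggle_antisym:
  assumes "m \<in> M" "finite M" "\<And>S. S \<in> Pow M \<Longrightarrow> g (toggle S m) = - g S"
  shows "(\<Sum>S\<in>Pow M. g S) = (0::complex)"
proof -
  have "toggle S m \<in> Pow M" if "S \<in> Pow M" for S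
    using assms(1) that by (auto simp: toggle_def)
  then have "(\<Sum>S\<in>Pow M. g S) = (\<Sum>S\<in>Pow M. g (toggle S m))"
    by (intro sum.reindex_bij_witness[where i = "\<lambda>S. toggle S m" and j = "\<lambda>S. toggle S m"])
      simp_all
  also have "\<dots> = - (\<Sum>S\<in>Pow M. g S)" using assms(3) by (simp add: sum_negf)
  finally show ?thesis by simp
qed

lemma trace_pairing_parity_mismatch:
  assumes "word_in_modes L Q" "parity_set Q \<noteq> parity_set W"
  shows "trace_pairing L (word_op Q) (word_op W) = 0"
proof -
  have "word_amp Q S * word_amp W S = 0" if "word_state Q S = word_state W S" for S
  proof (rule ccontr)
    assume "word_amp Q S * word_amp W S \<noteq> 0"
    then have "sym_diff S (parity_set Q) = sym_diff S (parity_set W)"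
      using that word_state_eq_sym_diff[of Q S] word_state_eq_sym_diff[of W S] by simp
    then show False using assms(2) by blast
  qed
  then show ?thesis by (auto simp: trace_pairing_word_op[OF assms(1)] intro!: sum.neutral)
qed

lemma trace_pairing_fermion_mismatch:
  assumes "word_in_modes L Q" "factors_at Q m = [e]" "factors_at W m = [e']"
    and "fermionic e" "fermionic e'" "e \<noteq> e'"
  shows "trace_pairing L (word_op Q) (word_op W) = 0"
proof -
  have "word_amp Q S * word_amp W S = 0" for S
  proof (rule ccontr)
    assume "word_amp Q S * word_amp W S \<noteq> 0"
    then have "m \<in> S \<longleftrightarrow> e = Cm" "m \<in> S \<longleftrightarrow> e' = Cm"
      using mem_if_single_fermion[OF assms(2,4)] mem_if_single_fermion[OF assms(3,5)] by auto
    then show False using assms(4-6) by (cases e; cases e') auto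
  qed
  then show ?thesis by (auto simp: trace_pairing_word_op[OF assms(1)] intro!: sum.neutral)
qed

text \<open>Toggling the occupation of \<open>m\<close> in the input state is a sign-reversing involution on the
  terms of the pairing when exactly one of the two words carries \<open>z\<close> at \<open>m\<close>.\<close>

lemma trace_pairing_z_mismatch:
  assumes "word_in_modes L Q" "m \<in> modes L" "parity_set Q = parity_set W"
    and "length (factors_at Q m) \<le> 1" "length (factors_at W m) \<le> 1"
    and "factor_at Q m \<in> {Zm, Im}" "factor_at W m \<in> {Zm, Im}" "factor_at Q m \<noteq> factor_at W m"
  shows "trace_pairing L (word_op Q) (word_op W) = 0"
proof -
  define g where "g S = (if word_state Q S = word_state W S then word_amp Q S * word_amp W S else 0)"
    for S
  have no_fermion: "no_fermion_at Q m" "no_fermion_at W m"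
    using assms(4-7) no_fermion_at_single by auto
  have "(-1::complex) ^ z_count Q m * (-1) ^ z_count W m = -1"
    using assms(6-8) z_count_single[OF assms(4)] z_count_single[OF assms(5)] by auto
  moreover have "jw_string_sign Q m * jw_string_sign W m = 1"
    by (simp add: jw_string_sign_eq assms(3) flip: power_add)
  ultimately have "g (toggle S m) = - g S" if "S \<in> Pow (modes L)" for S
    using word_toggle[OF _ no_fermion(1)] word_toggle[OF _ no_fermion(2)]
      finite_subset[OF _ finite_modes] that
    by (auto simp: g_def algebra_simps)
  then show ?thesis
    using sum_Pow_toggle_antisym[OF assms(2) finite_modes]
    by (simp add: trace_pairing_word_op[OF assms(1)] g_def)
qed

lemma trace_pairing_orthogonal:
  assumes "word_in_modes L Q" "word_in_modes L W" "simple_word Q"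
    and "length (factors_at W m) \<le> 1" "factor_at W m \<noteq> factor_at Q m"
  shows "trace_pairing L (word_op Q) (word_op W) = 0"
proof -
  have Q1: "length (factors_at Q m) \<le> 1" using assms(3) by (rule simple_word_factors_at)
  have "m < 2 * L"
    using assms(5) factor_at_out_of_modes[OF assms(1)] factor_at_out_of_modes[OF assms(2)] by metis
  then have "m \<in> modes L" by (simp add: modes_def)
  consider "fermionic (factor_at Q m) \<noteq> fermionic (factor_at W m)"
    | "fermionic (factor_at Q m)" "fermionic (factor_at W m)"
    | "factor_at Q m \<in> {Zm, Im}" "factor_at W m \<in> {Zm, Im}"
    by (cases "factor_at Q m"; cases "factor_at W m") auto
  then show ?thesis
  proof cases
    case 1
    then have "parity_set Q \<noteq> parity_set W"
      using mem_parity_set_single[OF Q1] mem_parity_set_single[OF assms(4)] by blast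
    then show ?thesis by (rule trace_pairing_parity_mismatch[OF assms(1)])
  next
    case 2
    then show ?thesis
      using factors_at_single[OF Q1] factors_at_single[OF assms(4)] assms(5)
      by (intro trace_pairing_fermion_mismatch[OF assms(1), of m "factor_at Q m" W "factor_at W m"])
        (auto simp: factor_at_if_Nil)
  next
    case 3
    show ?thesis
    proof (cases "parity_set Q = parity_set W")
      case True
      with 3 show ?thesis
        using trace_pairing_z_mismatch[OF assms(1) \<open>m \<in> modes L\<close> _ Q1 assms(4)] assms(5) by auto
    qed (rule trace_pairing_parity_mismatch[OF assms(1)])
  qed
qed

lemma word_amp_values: "word_amp W S \<in> {-1, 0, 1}"
proof (induction W)
  case (Cons p W)
  have "(-1::complex) ^ n \<in> {-1, 1}" for n by (cases "even n") simp_all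
  then have "loc_amp (snd p) (fst p) (word_state W S) \<in> {-1, 0, 1}"
    by (cases "snd p") (auto simp: jw_sign_def)
  with Cons show ?case by auto
qed simp

lemma simple_word_Cons: "simple_word (p # W) \<Longrightarrow> simple_word W"
  unfolding simple_word_def factors_at_Cons by (metis le_add2 le_trans length_append)

lemma word_amp_nonzero:
  assumes "simple_word W" "\<And>p. p \<in> set W \<Longrightarrow> snd p = Cm \<Longrightarrow> fst p \<in> S"
    "\<And>p. p \<in> set W \<Longrightarrow> snd p = Cd \<Longrightarrow> fst p \<notin> S"
  shows "word_amp W S \<noteq> 0"
  using assms
proof (induction W)
  case (Cons p W)
  obtain m e where p: "p = (m, e)" by force
  have IH: "word_amp W S \<noteq> 0" using Cons simple_word_Cons by auto
  have "factors_at W m = []" if "fermionic e"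
    using simple_word_factors_at[OF Cons.prems(1), of m] fermionic_nontrivial[OF that]
    by (simp add: p factors_at_Cons)
  then have "fermionic e \<Longrightarrow> m \<in> word_state W S \<longleftrightarrow> m \<in> S"
    by (simp add: word_state_mem_no_fermion no_fermion_at_if_no_fermionic_factor)
  then have "loc_amp e m (word_state W S) \<noteq> 0"
    using Cons.prems(2,3)[of p] by (cases e) (auto simp: p)
  with IH show ?case by (simp add: p)
qed simp

lemma trace_pairing_self_nonzero:
  assumes "simple_word W" "word_in_modes L W"
  shows "trace_pairing L (word_op W) (word_op W) \<noteq> 0"
proof -
  define S0 where "S0 = {fst p | p. p \<in> set W \<and> snd p = Cm}"
  have S0: "S0 \<in> Pow (modes L)" using assms(2) by (auto simp: S0_def word_in_modes_def modes_def)
  have "fst p \<notin> S0" if p: "p \<in> set W" "snd p = Cd" for p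
  proof
    assume "fst p \<in> S0"
    then obtain p' where p': "p' \<in> set W" "snd p' = Cm" "fst p' = fst p" by (auto simp: S0_def)
    have "{Cm, Cd} \<subseteq> set (factors_at W (fst p))"
      using factor_in_factors_at[OF p(1)] factor_in_factors_at[OF p'(1)] p p' by auto
    then show False
      using simple_word_factors_at[OF assms(1), of "fst p"] by (cases "factors_at W (fst p)") auto
  qed
  then have nz: "word_amp W S0 \<noteq> 0"
    by (intro word_amp_nonzero[OF assms(1)]) (auto simp: S0_def)
  have sq: "word_amp W S * word_amp W S = of_nat (if word_amp W S \<noteq> 0 then 1 else 0)" for S
    using word_amp_values[of W S] by auto
  have "trace_pairing L (word_op W) (word_op W)
      = (\<Sum>S\<in>Pow (modes L). of_nat (if word_amp W S \<noteq> 0 then 1 else 0))"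
    unfolding trace_pairing_word_op[OF assms(2)] by (intro sum.cong refl) (simp add: sq)
  also have "\<dots> = of_nat (\<Sum>S\<in>Pow (modes L). if word_amp W S \<noteq> 0 then 1 else 0)"
    by (rule of_nat_sum[symmetric])
  also have "(\<Sum>S\<in>Pow (modes L). (if word_amp W S \<noteq> 0 then 1 else 0::nat)) \<noteq> 0"
    using S0 nz by (simp add: sum_eq_0_iff) blast
  then have "of_nat (\<Sum>S\<in>Pow (modes L). if word_amp W S \<noteq> 0 then 1 else 0) \<noteq> (0::complex)"
    by (metis of_nat_eq_0_iff)
  finally show ?thesis .
qed

section \<open>Rearranging words\<close>

definition word_rel :: "nat \<Rightarrow> complex \<Rightarrow> word \<Rightarrow> word \<Rightarrow> bool" where
  "word_rel L a A B \<longleftrightarrow> (\<forall>S\<in>Pow (modes L).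
     (word_amp A S \<noteq> 0 \<longrightarrow> word_state A S = word_state B S) \<and> word_amp A S = a * word_amp B S)"

lemma word_rel_refl: "word_rel L 1 A A"
  by (simp add: word_rel_def)

lemma word_rel_trans:
  assumes "word_rel L a A B" "word_rel L b B C"
  shows "word_rel L (a * b) A C"
  unfolding word_rel_def
proof (intro ballI conjI impI)
  fix S assume "S \<in> Pow (modes L)"
  with assms have AB: "word_amp A S \<noteq> 0 \<longrightarrow> word_state A S = word_state B S"
      "word_amp A S = a * word_amp B S"
    and BC: "word_amp B S \<noteq> 0 \<longrightarrow> word_state B S = word_state C S"
      "word_amp B S = b * word_amp C S"
    by (auto simp: word_rel_def)
  then show "word_amp A S = a * b * word_amp C S" by simp
  assume "word_amp A S \<noteq> 0"
  with AB BC show "word_state A S = word_state C S" by auto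
qed

lemma word_rel_context:
  assumes "word_rel L a A B" "a \<noteq> 0" "word_in_modes L V"
  shows "word_rel L a (U @ A @ V) (U @ B @ V)"
  unfolding word_rel_def
proof
  fix S assume "S \<in> Pow (modes L)"
  then have "word_state V S \<in> Pow (modes L)" using word_state_Pow[OF assms(3)] by blast
  with assms(1,2) show "(word_amp (U @ A @ V) S \<noteq> 0 \<longrightarrow>
      word_state (U @ A @ V) S = word_state (U @ B @ V) S) \<and>
      word_amp (U @ A @ V) S = a * word_amp (U @ B @ V) S"
    unfolding word_rel_def by (cases "word_amp A (word_state V S) = 0") auto
qed

lemma word_rel_word_op:
  assumes "word_rel L a A B" "a \<noteq> 0" "S \<in> Pow (modes L)"
  shows "word_op A T S = a * word_op B T S"
  using assms unfolding word_rel_def word_op_def by (cases "word_amp A S = 0") auto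

lemma word_rel_pairing:
  assumes "word_rel L a A B" "a \<noteq> 0"
  shows "trace_pairing L X (word_op A) = a * trace_pairing L X (word_op B)"
proof -
  have "trace_pairing L X (word_op A) = trace_pairing L X (\<lambda>T S. a * word_op B T S)"
    by (rule trace_pairing_cong) (use word_rel_word_op[OF assms] in auto)
  then show ?thesis by (simp add: trace_pairing_scale)
qed

lemma word_rel_pairing_context:
  "word_rel L a A B \<Longrightarrow> a \<noteq> 0 \<Longrightarrow> word_in_modes L Wr \<Longrightarrow>
    trace_pairing L X (word_op (Wl @ A @ Wr)) = a * trace_pairing L X (word_op (Wl @ B @ Wr))"
  by (rule word_rel_pairing[OF word_rel_context])

lemma trace_pairing_null_word:
  assumes "\<And>R. R \<in> Pow (modes L) \<Longrightarrow> word_amp A R = 0" "word_in_modes L V"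
  shows "trace_pairing L X (word_op (U @ A @ V)) = 0"
proof -
  have "trace_pairing L X (word_op (U @ A @ V)) = trace_pairing L X (\<lambda>T S. 0)"
    by (rule trace_pairing_cong) (use assms word_state_Pow in \<open>auto simp: word_op_def\<close>)
  then show ?thesis by simp
qed

lemma jw_sign_insert:
  assumes "finite R" "m' \<noteq> m"
  shows "jw_sign m (insert m' R) = (if m' < m \<and> m' \<notin> R then - jw_sign m R else jw_sign m R)"
  using jw_sign_toggle[OF assms] by (cases "m' \<in> R") (auto simp: toggle_def insert_absorb)

lemma jw_sign_remove:
  assumes "finite R" "m' \<noteq> m"
  shows "jw_sign m (R - {m'}) = (if m' < m \<and> m' \<in> R then - jw_sign m R else jw_sign m R)"
  using jw_sign_toggle[OF assms] by (cases "m' \<in> R") (auto simp: toggle_def)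

lemma loc_amp_swap:
  assumes "finite R" "m \<noteq> m'"
  shows "loc_amp e m (loc_step e' m' R) * loc_amp e' m' R =
    (if fermionic e \<and> fermionic e' \<and> m' < m then -1 else 1) * (loc_amp e m R * loc_amp e' m' R)"
proof (cases e')
  case Cm
  then show ?thesis
    using assms jw_sign_remove[OF assms(1) assms(2)[symmetric]] by (cases "m' \<in> R"; cases e) auto
next
  case Cd
  then show ?thesis
    using assms jw_sign_insert[OF assms(1) assms(2)[symmetric]] by (cases "m' \<in> R"; cases e) auto
qed simp_all

definition swap_sign :: "loc \<Rightarrow> loc \<Rightarrow> complex" where
  "swap_sign e e' = (if fermionic e \<and> fermionic e' then -1 else 1)"

lemma swap_sign_nonzero: "swap_sign e e' \<noteq> 0"
  by (simp add: swap_sign_def)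

lemma word_rel_swap:
  assumes "m \<noteq> m'"
  shows "word_rel L (swap_sign e e') [(m, e), (m', e')] [(m', e'), (m, e)]"
  unfolding word_rel_def
proof (intro ballI conjI impI)
  fix S assume "S \<in> Pow (modes L)"
  then have "finite S" by (auto intro: finite_subset)
  show "word_state [(m, e), (m', e')] S = word_state [(m', e'), (m, e)] S"
    using assms by (cases e; cases e') auto
  show "word_amp [(m, e), (m', e')] S = swap_sign e e' * word_amp [(m', e'), (m, e)] S"
    using loc_amp_swap[OF \<open>finite S\<close> assms, of e e'] loc_amp_swap[OF \<open>finite S\<close> assms[symmetric], of e' e]
      assms
    by (auto simp: swap_sign_def)
qed

definition pass_sign :: "loc \<Rightarrow> word \<Rightarrow> complex" where
  "pass_sign e V = (if fermionic e then (-1) ^ length (filter (\<lambda>p. fermionic (snd p)) V) else 1)"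

lemma pass_sign_nonzero: "pass_sign e V \<noteq> 0"
  by (simp add: pass_sign_def)

lemma pass_sign_same_parity: "fermionic e = fermionic e' \<Longrightarrow> pass_sign e V * pass_sign e' V = 1"
  by (simp add: pass_sign_def flip: power_add)

lemma word_rel_move:
  assumes "\<forall>p\<in>set V. fst p \<noteq> m" "word_in_modes L V"
  shows "word_rel L (pass_sign e V) ((m, e) # V) (V @ [(m, e)])"
  using assms
proof (induction V)
  case Nil
  then show ?case by (simp add: word_rel_refl pass_sign_def)
next
  case (Cons v V)
  obtain m' e' where v: "v = (m', e')" by force
  have "m \<noteq> m'" using Cons.prems by (auto simp: v)
  have "word_rel L (swap_sign e e') ((m, e) # v # V) (v # (m, e) # V)"
    using word_rel_context[OF word_rel_swap[OF \<open>m \<noteq> m'\<close>, of L e e'] swap_sign_nonzero, of V "[]"]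
      Cons.prems
    by (simp add: v)
  moreover have "word_rel L (pass_sign e V) (v # (m, e) # V) (v # V @ [(m, e)])"
    using word_rel_context[OF Cons.IH pass_sign_nonzero, of "[]" "[v]"] Cons.prems by simp
  moreover have "pass_sign e (v # V) = swap_sign e e' * pass_sign e V"
    by (auto simp: pass_sign_def swap_sign_def v)
  ultimately show ?case by (simp add: word_rel_trans)
qed

lemma word_rel_move_pair:
  assumes "\<forall>p\<in>set V. fst p \<noteq> m1 \<and> fst p \<noteq> m2" "word_in_modes L V" "m1 < 2 * L" "m2 < 2 * L"
  shows "word_rel L (pass_sign e1 V * pass_sign e2 V) ([(m1, e1), (m2, e2)] @ V) (V @ [(m1, e1), (m2, e2)])"
proof -
  have first: "word_rel L (pass_sign e2 V) ((m1, e1) # (m2, e2) # V) ((m1, e1) # V @ [(m2, e2)])"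
    using word_rel_context[OF word_rel_move[of V m2 L e2] pass_sign_nonzero, of "[]" "[(m1, e1)]"]
      assms by simp
  have second: "word_rel L (pass_sign e1 V) ((m1, e1) # V @ [(m2, e2)]) (V @ [(m1, e1), (m2, e2)])"
    using word_rel_context[OF word_rel_move[of V m1 L e1] pass_sign_nonzero, of "[(m2, e2)]" "[]"]
      assms by simp
  from word_rel_trans[OF first second] show ?thesis by (simp add: mult.commute)
qed

lemma word_rel_move_to_end:
  assumes "simple_word (U @ [(x, e)] @ V)" "\<forall>p\<in>set (U @ V). snd p \<noteq> Im" "e \<noteq> Im"
    and "word_in_modes L V"
  shows "word_rel L (pass_sign e V) (U @ [(x, e)] @ V) (U @ V @ [(x, e)])"
  using word_rel_context[OF word_rel_move[of V x L e] pass_sign_nonzero, of "[]" U]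
    simple_word_split[OF assms(1-3)] assms(4) by simp

lemma word_rel_z_cd: "word_rel L 1 [(m, Zm), (m, Cd)] [(m, Cd)]"
  and word_rel_cd_z: "word_rel L (-1) [(m, Cd), (m, Zm)] [(m, Cd)]"
  and word_rel_z_c: "word_rel L (-1) [(m, Zm), (m, Cm)] [(m, Cm)]"
  and word_rel_c_z: "word_rel L 1 [(m, Cm), (m, Zm)] [(m, Cm)]"
  by (auto simp: word_rel_def)

lemma trace_pairing_anticomm:
  assumes "word_in_modes L V"
  shows "trace_pairing L X (word_op (U @ [(m, Cm), (m, Cd)] @ V))
    + trace_pairing L X (word_op (U @ [(m, Cd), (m, Cm)] @ V)) = trace_pairing L X (word_op (U @ V))"
proof -
  have "word_op (U @ [(m, Cm), (m, Cd)] @ V) T S + word_op (U @ [(m, Cd), (m, Cm)] @ V) T S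
      = word_op (U @ V) T S" for T S
  proof (cases "m \<in> word_state V S")
    case True
    then have "insert m (word_state V S - {m}) = word_state V S" by auto
    with True show ?thesis by (simp add: word_op_def jw_sign_square)
  next
    case False
    then have "insert m (word_state V S) - {m} = word_state V S" by auto
    with False show ?thesis by (simp add: word_op_def jw_sign_square)
  qed
  then show ?thesis by (simp add: trace_pairing_add[symmetric])
qed

section \<open>Commutators with a hopping term\<close>

definition comm_pairing :: "nat \<Rightarrow> op \<Rightarrow> word \<Rightarrow> word \<Rightarrow> complex" where
  "comm_pairing L X B T = trace_pairing L X (word_op (B @ T)) - trace_pairing L X (word_op (T @ B))"

lemma comm_pairing_disjoint:
  assumes "\<forall>p\<in>set B. fst p \<noteq> m1 \<and> fst p \<noteq> m2" "word_in_modes L B" "m1 < 2 * L" "m2 < 2 * L"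
    and "fermionic e1 = fermionic e2"
  shows "comm_pairing L X B [(m1, e1), (m2, e2)] = 0"
proof -
  have "word_rel L 1 ([(m1, e1), (m2, e2)] @ B) (B @ [(m1, e1), (m2, e2)])"
    using word_rel_move_pair[OF assms(1-4), of e1 e2] pass_sign_same_parity[OF assms(5)] by simp
  then show ?thesis using word_rel_pairing[of L 1] by (simp add: comm_pairing_def)
qed

lemma comm_pairing_nonzero_touches:
  assumes "word_in_modes L B" "\<forall>p\<in>set B. snd p \<noteq> Im" "m1 < 2 * L" "m2 < 2 * L"
    and "fermionic e1 = fermionic e2" "comm_pairing L X B [(m1, e1), (m2, e2)] \<noteq> 0"
  shows "factor_at B m1 \<noteq> Im \<or> factor_at B m2 \<noteq> Im"
  using comm_pairing_disjoint[OF _ assms(1,3-5)] assms(2,6)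
  by (auto simp: factor_at_eq_Im_iff factors_at_eq_Nil_iff)

lemma comm_pairing_nonzero_agrees:
  assumes Q: "word_in_modes L Q" "simple_word Q" and B: "word_in_modes L B" "simple_word B"
    and T: "m1 \<noteq> m2" "e1 \<noteq> Im" "e2 \<noteq> Im" "m1 < 2 * L" "m2 < 2 * L"
    and nz: "comm_pairing L (word_op Q) B [(m1, e1), (m2, e2)] \<noteq> 0"
  shows "\<And>m. m \<noteq> m1 \<Longrightarrow> m \<noteq> m2 \<Longrightarrow> factor_at B m = factor_at Q m"
    and "factor_at B m1 = Im \<Longrightarrow> factor_at Q m1 = e1"
    and "factor_at B m2 = Im \<Longrightarrow> factor_at Q m2 = e2"
proof -
  obtain W where W: "W = B @ [(m1, e1), (m2, e2)] \<or> W = [(m1, e1), (m2, e2)] @ B"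
    and nzW: "trace_pairing L (word_op Q) (word_op W) \<noteq> 0"
    using nz unfolding comm_pairing_def by (metis diff_self)
  have factors: "factors_at W m = factors_at B m @ factors_at [(m1, e1), (m2, e2)] m \<or>
      factors_at W m = factors_at [(m1, e1), (m2, e2)] m @ factors_at B m" for m
    using W by (metis factors_at_append)
  have "word_in_modes L W" using W B T by auto
  then have agree: "factor_at W m = factor_at Q m" if "length (factors_at W m) \<le> 1" for m
    using trace_pairing_orthogonal[OF Q(1) _ Q(2) that] nzW by blast
  have pair: "factors_at [(m1, e1), (m2, e2)] m =
      (if m = m1 then [e1] else []) @ (if m = m2 then [e2] else [])" for m
    using T by (simp add: factors_at_def)
  have B1: "length (factors_at B m) \<le> 1" for m using B(2) by (rule simple_word_factors_at)
  show "factor_at B m = factor_at Q m" if "m \<noteq> m1" "m \<noteq> m2" for m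
    using factors[of m] agree[of m] B1[of m] that by (auto simp: pair factor_at_def)
  show "factor_at Q m1 = e1" if "factor_at B m1 = Im"
  proof -
    have "factors_at W m1 = [e1]" using factors[of m1] that T by (auto simp: pair factor_at_eq_Im_iff)
    then show ?thesis using agree[of m1] by (simp add: factor_at_def)
  qed
  show "factor_at Q m2 = e2" if "factor_at B m2 = Im"
  proof -
    have "factors_at W m2 = [e2]" using factors[of m2] that T by (auto simp: pair factor_at_eq_Im_iff)
    then show ?thesis using agree[of m2] by (simp add: factor_at_def)
  qed
qed

locale hop_setup =
  fixes L :: nat and B U V :: word and x y :: nat and e :: loc
  assumes split: "B = U @ [(x, e)] @ V" and simple: "simple_word B"
    and in_modes: "word_in_modes L B" and nontrivial: "\<forall>p\<in>set B. snd p \<noteq> Im"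
    and no_y: "\<forall>p\<in>set B. fst p \<noteq> y"
    and x_ne_y: "x \<noteq> y" and x_less: "x < 2 * L" and y_less: "y < 2 * L" and e: "e \<noteq> Im"
begin

lemma rest_in_modes: "word_in_modes L (U @ V)"
  using in_modes split by simp

lemma rest_avoids: "\<forall>p\<in>set (U @ V). fst p \<noteq> x \<and> fst p \<noteq> y"
  using simple_word_split[of U x e V] simple nontrivial no_y e split by auto

lemma move_factor_to_end: "word_rel L (pass_sign e V) B (U @ V @ [(x, e)])"
  using word_rel_move_to_end[of U x e V L] simple nontrivial e in_modes split by simp

lemma pairing_move_factor_to_end:
  assumes "word_in_modes L Wr"
  shows "trace_pairing L X (word_op (Wl @ B @ Wr))
    = pass_sign e V * trace_pairing L X (word_op (Wl @ U @ V @ [(x, e)] @ Wr))"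
  using word_rel_pairing_context[OF move_factor_to_end pass_sign_nonzero assms]
  by (simp only: append_assoc)

lemma pairing_move_hop_past_rest:
  assumes "a1 \<in> {x, y}" "a2 \<in> {x, y}" "fermionic e1 = fermionic e2"
  shows "trace_pairing L X (word_op ([(a1, e1), (a2, e2)] @ U @ V @ [(x, e)]))
    = trace_pairing L X (word_op (U @ V @ [(a1, e1), (a2, e2), (x, e)]))"
proof -
  have "\<forall>p\<in>set (U @ V). fst p \<noteq> a1 \<and> fst p \<noteq> a2" using assms(1,2) rest_avoids by blast
  moreover have "a1 < 2 * L" "a2 < 2 * L" using assms(1,2) x_less y_less by auto
  ultimately have rel: "word_rel L 1 ([(a1, e1), (a2, e2)] @ U @ V) ((U @ V) @ [(a1, e1), (a2, e2)])"
    using word_rel_move_pair[of "U @ V" a1 a2 L e1 e2] pass_sign_same_parity[OF assms(3)]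
      rest_in_modes
    by simp
  have "word_in_modes L [(x, e)]" using x_less by simp
  from word_rel_pairing_context[OF rel one_neq_zero this, of X "[]"] show ?thesis
    by (simp only: append_Nil append_assoc append_Cons mult_1)
qed

lemma comm_pairing_hop_to_reordered:
  "comm_pairing L X B [(x, Cd), (y, Cm)] = pass_sign e V *
    (trace_pairing L X (word_op (U @ V @ [(x, e), (x, Cd), (y, Cm)]))
     - swap_sign Cm e * trace_pairing L X (word_op (U @ V @ [(x, Cd), (x, e), (y, Cm)])))"
proof -
  let ?P = "\<lambda>W. trace_pairing L X (word_op W)"
  have right: "?P (B @ [(x, Cd), (y, Cm)]) = pass_sign e V * ?P (U @ V @ [(x, e), (x, Cd), (y, Cm)])"
    using pairing_move_factor_to_end[of "[(x, Cd), (y, Cm)]" X "[]"] x_less y_less by simp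
  have "?P ([(x, Cd), (y, Cm)] @ B) = pass_sign e V * ?P ([(x, Cd), (y, Cm)] @ U @ V @ [(x, e)])"
    using pairing_move_factor_to_end[of "[]" X "[(x, Cd), (y, Cm)]"] by simp
  also have "?P ([(x, Cd), (y, Cm)] @ U @ V @ [(x, e)]) = ?P (U @ V @ [(x, Cd), (y, Cm), (x, e)])"
    by (rule pairing_move_hop_past_rest[of x y Cd Cm]) simp_all
  also have "\<dots> = swap_sign Cm e * ?P (U @ V @ [(x, Cd), (x, e), (y, Cm)])"
    using word_rel_pairing_context[where X = X and Wl = "U @ V @ [(x, Cd)]" and Wr = "[]",
        OF word_rel_swap[OF x_ne_y[symmetric], of L Cm e] swap_sign_nonzero]
    by simp
  finally show ?thesis using right by (simp add: comm_pairing_def algebra_simps)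
qed

lemma comm_pairing_hop_to:
  "comm_pairing L X B [(x, Cd), (y, Cm)] =
    (if e = Zm then 2 * pass_sign e V * trace_pairing L X (word_op (U @ V @ [(x, Cd), (y, Cm)]))
     else if e = Cm then pass_sign e V * trace_pairing L X (word_op (U @ V @ [(y, Cm)])) else 0)"
proof -
  let ?P = "\<lambda>W. trace_pairing L X (word_op W)"
  note ctx = word_rel_pairing_context[where X = X]
  show ?thesis
  proof (cases e)
    case Zm
    have "?P ((U @ V) @ [(x, Zm), (x, Cd)] @ [(y, Cm)]) = ?P ((U @ V) @ [(x, Cd)] @ [(y, Cm)])"
      "?P ((U @ V) @ [(x, Cd), (x, Zm)] @ [(y, Cm)]) = - ?P ((U @ V) @ [(x, Cd)] @ [(y, Cm)])"
      using ctx[OF word_rel_z_cd[of L x], of "[(y, Cm)]" "U @ V"]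
        ctx[OF word_rel_cd_z[of L x], of "[(y, Cm)]" "U @ V"] y_less
      by simp_all
    with Zm show ?thesis by (simp add: comm_pairing_hop_to_reordered swap_sign_def)
  next
    case Cm
    have anticomm: "?P (U @ V @ [(x, Cm), (x, Cd), (y, Cm)])
        + ?P (U @ V @ [(x, Cd), (x, Cm), (y, Cm)]) = ?P (U @ V @ [(y, Cm)])"
      using trace_pairing_anticomm[of L "[(y, Cm)]" X "U @ V" x] y_less by simp
    from Cm show ?thesis
      by (simp add: comm_pairing_hop_to_reordered swap_sign_def algebra_simps flip: anticomm)
  next
    case Cd
    have "?P ((U @ V) @ [(x, Cd), (x, Cd)] @ [(y, Cm)]) = 0"
      by (rule trace_pairing_null_word) (use y_less in auto)
    with Cd show ?thesis by (simp add: comm_pairing_hop_to_reordered)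
  qed (use e in simp)
qed

lemma comm_pairing_hop_from_reordered:
  "comm_pairing L X B [(y, Cd), (x, Cm)] = pass_sign e V *
    (swap_sign e Cd * trace_pairing L X (word_op (U @ V @ [(y, Cd), (x, e), (x, Cm)]))
     - trace_pairing L X (word_op (U @ V @ [(y, Cd), (x, Cm), (x, e)])))"
proof -
  let ?P = "\<lambda>W. trace_pairing L X (word_op W)"
  have "?P (B @ [(y, Cd), (x, Cm)]) = pass_sign e V * ?P (U @ V @ [(x, e), (y, Cd), (x, Cm)])"
    using pairing_move_factor_to_end[of "[(y, Cd), (x, Cm)]" X "[]"] x_less y_less by simp
  also have "?P (U @ V @ [(x, e), (y, Cd), (x, Cm)]) =
      swap_sign e Cd * ?P (U @ V @ [(y, Cd), (x, e), (x, Cm)])"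
    using word_rel_pairing_context[where X = X and Wl = "U @ V" and Wr = "[(x, Cm)]",
        OF word_rel_swap[OF x_ne_y, of L e Cd] swap_sign_nonzero] x_less
    by simp
  finally have right: "?P (B @ [(y, Cd), (x, Cm)]) =
      pass_sign e V * swap_sign e Cd * ?P (U @ V @ [(y, Cd), (x, e), (x, Cm)])" by simp
  have "?P ([(y, Cd), (x, Cm)] @ B) = pass_sign e V * ?P ([(y, Cd), (x, Cm)] @ U @ V @ [(x, e)])"
    using pairing_move_factor_to_end[of "[]" X "[(y, Cd), (x, Cm)]"] by simp
  also have "?P ([(y, Cd), (x, Cm)] @ U @ V @ [(x, e)]) = ?P (U @ V @ [(y, Cd), (x, Cm), (x, e)])"
    by (rule pairing_move_hop_past_rest[of y x Cd Cm]) simp_all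
  finally show ?thesis using right by (simp add: comm_pairing_def algebra_simps)
qed

lemma comm_pairing_hop_from:
  "comm_pairing L X B [(y, Cd), (x, Cm)] =
    (if e = Zm then - 2 * pass_sign e V * trace_pairing L X (word_op (U @ V @ [(y, Cd), (x, Cm)]))
     else if e = Cd then - pass_sign e V * trace_pairing L X (word_op (U @ V @ [(y, Cd)])) else 0)"
proof -
  let ?P = "\<lambda>W. trace_pairing L X (word_op W)"
  note ctx = word_rel_pairing_context[where X = X]
  show ?thesis
  proof (cases e)
    case Zm
    have "?P ((U @ V @ [(y, Cd)]) @ [(x, Zm), (x, Cm)] @ []) = - ?P ((U @ V @ [(y, Cd)]) @ [(x, Cm)] @ [])"
      "?P ((U @ V @ [(y, Cd)]) @ [(x, Cm), (x, Zm)] @ []) = ?P ((U @ V @ [(y, Cd)]) @ [(x, Cm)] @ [])"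
      using ctx[OF word_rel_z_c[of L x], of "[]" "U @ V @ [(y, Cd)]"]
        ctx[OF word_rel_c_z[of L x], of "[]" "U @ V @ [(y, Cd)]"]
      by simp_all
    with Zm show ?thesis by (simp add: comm_pairing_hop_from_reordered swap_sign_def)
  next
    case Cd
    have anticomm: "?P (U @ V @ [(y, Cd), (x, Cm), (x, Cd)])
        + ?P (U @ V @ [(y, Cd), (x, Cd), (x, Cm)]) = ?P (U @ V @ [(y, Cd)])"
      using trace_pairing_anticomm[of L "[]" X "U @ V @ [(y, Cd)]" x] by simp
    from Cd show ?thesis
      by (simp add: comm_pairing_hop_from_reordered swap_sign_def algebra_simps flip: anticomm)
  next
    case Cm
    have "?P ((U @ V @ [(y, Cd)]) @ [(x, Cm), (x, Cm)] @ []) = 0"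
      by (rule trace_pairing_null_word) auto
    with Cm show ?thesis by (simp add: comm_pairing_hop_from_reordered)
  qed (use e in simp)
qed

text \<open>When \<open>e\<close> is fermionic, both commutators leave mode \<open>x\<close> empty, so they are orthogonal to
  every word that acts nontrivially at \<open>x\<close>.\<close>

lemma comm_pairing_hop_vanishes:
  assumes "fermionic e" "word_in_modes L Q" "simple_word Q" "factor_at Q x \<noteq> Im"
  shows "comm_pairing L (word_op Q) B [(x, Cd), (y, Cm)] = 0"
    and "comm_pairing L (word_op Q) B [(y, Cd), (x, Cm)] = 0"
proof -
  have "trace_pairing L (word_op Q) (word_op (U @ V @ [(y, c)])) = 0" for c
  proof (rule trace_pairing_orthogonal[OF assms(2) _ assms(3)])
    have "factors_at (U @ V @ [(y, c)]) x = []"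
      using rest_avoids x_ne_y by (auto simp: factors_at_def filter_empty_conv)
    then show "length (factors_at (U @ V @ [(y, c)]) x) \<le> 1"
      "factor_at (U @ V @ [(y, c)]) x \<noteq> factor_at Q x"
      using assms(4) by (simp_all add: factor_at_if_Nil)
    show "word_in_modes L (U @ V @ [(y, c)])" using rest_in_modes y_less by simp
  qed
  with assms(1) show "comm_pairing L (word_op Q) B [(x, Cd), (y, Cm)] = 0"
    "comm_pairing L (word_op Q) B [(y, Cd), (x, Cm)] = 0"
    unfolding comm_pairing_hop_to comm_pairing_hop_from by (cases e; simp)+
qed

end

definition bond_pairing :: "nat \<Rightarrow> op \<Rightarrow> word \<Rightarrow> nat \<Rightarrow> spin \<Rightarrow> complex" where
  "bond_pairing L X B j s = comm_pairing L X B (hop_word L j s) + comm_pairing L X B (hop_word' L j s)"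

definition comm_hubbard_pairing :: "nat \<Rightarrow> real \<Rightarrow> op \<Rightarrow> word \<Rightarrow> complex" where
  "comm_hubbard_pairing L U X B = (\<Sum>j<L. (\<Sum>s\<in>{Up, Dn}. -2 * bond_pairing L X B j s)
     + complex_of_real U * comm_pairing L X B (interaction_word L j))"

lemma trace_pairing_comm_hubbard_words:
  assumes "0 < L" "word_in_modes L B"
  shows "trace_pairing L X (\<lambda>T S. opmul L (word_op B) (hubbard_words L U) T S
      - opmul L (hubbard_words L U) (word_op B) T S) = comm_hubbard_pairing L U X B"
proof -
  let ?C = "\<lambda>W T S. word_op (B @ W) T S - word_op (W @ B) T S"
  have "opmul L (word_op B) (hubbard_words L U) T S - opmul L (hubbard_words L U) (word_op B) T S
      = (\<Sum>j<L. (\<Sum>s\<in>{Up, Dn}. -2 * (?C (hop_word L j s) T S + ?C (hop_word' L j s) T S))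
          + complex_of_real U * ?C (interaction_word L j) T S)"
    if "T \<in> Pow (modes L)" "S \<in> Pow (modes L)" for T S
  proof -
    note mul = opmul_word_op[OF _ that(2)]
    have "opmul L (word_op B) (hubbard_words L U) T S = (\<Sum>j<L.
        (\<Sum>s\<in>{Up, Dn}. -2 * (word_op (B @ hop_word L j s) T S + word_op (B @ hop_word' L j s) T S))
        + complex_of_real U * word_op (B @ interaction_word L j) T S)"
      unfolding hubbard_words_def
      by (simp only: opmul_sum_right opmul_add_right opmul_scale_right
          mul[OF word_in_modes_hop_word[OF assms(1)]] mul[OF word_in_modes_hop_word'[OF assms(1)]]
          mul[OF word_in_modes_interaction_word[OF assms(1)]])
    moreover have "opmul L (hubbard_words L U) (word_op B) T S = (\<Sum>j<L.
        (\<Sum>s\<in>{Up, Dn}. -2 * (word_op (hop_word L j s @ B) T S + word_op (hop_word' L j s @ B) T S))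
        + complex_of_real U * word_op (interaction_word L j @ B) T S)"
      unfolding hubbard_words_def
      by (simp only: opmul_sum_left opmul_add_left opmul_scale_left mul[OF assms(2)])
    ultimately show ?thesis by (simp add: sum_subtractf[symmetric] algebra_simps sum.distrib)
  qed
  then have "trace_pairing L X (\<lambda>T S. opmul L (word_op B) (hubbard_words L U) T S
      - opmul L (hubbard_words L U) (word_op B) T S)
    = trace_pairing L X (\<lambda>T S. \<Sum>j<L.
        (\<Sum>s\<in>{Up, Dn}. -2 * (?C (hop_word L j s) T S + ?C (hop_word' L j s) T S))
        + complex_of_real U * ?C (interaction_word L j) T S)"
    by (rule trace_pairing_cong)
  also have "\<dots> = comm_hubbard_pairing L U X B"
    unfolding comm_hubbard_pairing_def bond_pairing_def comm_pairing_def
    by (simp only: trace_pairing_sum trace_pairing_add trace_pairing_scale trace_pairing_diff)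
  finally show ?thesis .
qed

lemma opmul_commutator_sum:
  "opmul L (\<lambda>T S. \<Sum>x\<in>X. f x T S) B T S - opmul L B (\<lambda>T S. \<Sum>x\<in>X. f x T S) T S
   = (\<Sum>x\<in>X. opmul L (f x) B T S - opmul L B (f x) T S)"
  by (simp add: opmul_sum_left opmul_sum_right sum_subtractf)

lemma opmul_commutator_scale:
  "opmul L (\<lambda>T S. a * A T S) B T S - opmul L B (\<lambda>T S. a * A T S) T S
   = a * (opmul L A B T S - opmul L B A T S)"
  by (simp add: opmul_scale_left opmul_scale_right algebra_simps)

lemma commutes_hubbard_pairing:
  assumes L: "0 < L" and comm: "commutes L (local_sum L k c) (hubbard L U)"
  shows "(\<Sum>l\<in>{1..k}. \<Sum>j<L. \<Sum>es\<in>supp_elems l. c j es * comm_hubbard_pairing L U X (basis_word L j es))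
    = 0"
proof -
  let ?F = "local_sum L k c" and ?H = "hubbard_words L U"
  have pointwise: "opmul L ?F (hubbard L U) T S - opmul L (hubbard L U) ?F T S =
      (\<Sum>l\<in>{1..k}. \<Sum>j<L. \<Sum>es\<in>supp_elems l. c j es *
        (opmul L (word_op (basis_word L j es)) ?H T S - opmul L ?H (word_op (basis_word L j es)) T S))"
    if TS: "T \<in> Pow (modes L)" "S \<in> Pow (modes L)" for T S
  proof -
    have H: "fock_eq L (hubbard L U) ?H" and F: "fock_eq L ?F ?F"
      using hubbard_fock_eq[OF L] by (simp_all add: fock_eq_def)
    have "opmul L ?F (hubbard L U) T S - opmul L (hubbard L U) ?F T S
        = opmul L ?F ?H T S - opmul L ?H ?F T S"
      using opmul_cong[OF F H TS] opmul_cong[OF H F TS] by simp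
    also have "\<dots> = (\<Sum>l\<in>{1..k}. \<Sum>j<L. \<Sum>es\<in>supp_elems l. c j es *
        (opmul L (basis_elem L j es) ?H T S - opmul L ?H (basis_elem L j es) T S))"
      unfolding local_sum_def by (simp add: opmul_commutator_sum opmul_commutator_scale)
    also have "\<dots> = (\<Sum>l\<in>{1..k}. \<Sum>j<L. \<Sum>es\<in>supp_elems l. c j es *
        (opmul L (word_op (basis_word L j es)) ?H T S - opmul L ?H (word_op (basis_word L j es)) T S))"
    proof -
      have "opmul L (basis_elem L j es) ?H T S = opmul L (word_op (basis_word L j es)) ?H T S"
        "opmul L ?H (basis_elem L j es) T S = opmul L ?H (word_op (basis_word L j es)) T S" for j es
        using opmul_cong[OF basis_elem_fock_eq[OF L] _ TS] opmul_cong[OF _ basis_elem_fock_eq[OF L] TS]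
        by (auto simp: fock_eq_def)
      then show ?thesis by simp
    qed
    finally show ?thesis .
  qed
  have "0 = trace_pairing L X (\<lambda>T S. opmul L ?F (hubbard L U) T S - opmul L (hubbard L U) ?F T S)"
    using comm trace_pairing_cong[of L "\<lambda>T S. 0"] by (simp add: commutes_def)
  also have "\<dots> = (\<Sum>l\<in>{1..k}. \<Sum>j<L. \<Sum>es\<in>supp_elems l. c j es * comm_hubbard_pairing L U X (basis_word L j es))"
    by (simp only: trace_pairing_cong[OF pointwise] trace_pairing_sum trace_pairing_scale
        trace_pairing_comm_hubbard_words[OF L word_in_modes_basis_word[OF L]])
  finally show ?thesis by simp
qed

lemma sum_sites_spins_single:
  fixes F :: "nat \<Rightarrow> spin \<Rightarrow> complex"
  assumes "p < L" "\<And>j s. j < L \<Longrightarrow> j \<noteq> p \<or> s \<noteq> \<tau> \<Longrightarrow> F j s = 0"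
  shows "(\<Sum>j<L. \<Sum>s\<in>{Up, Dn}. F j s) = F p \<tau>"
proof -
  have "(\<Sum>s\<in>{Up, Dn}. F j s) = (if j = p then F p \<tau> else 0)" if "j < L" for j
    using assms(2)[OF that] by (cases \<tau>) auto
  then have "(\<Sum>j<L. \<Sum>s\<in>{Up, Dn}. F j s) = (\<Sum>j<L. if j = p then F p \<tau> else 0)"
    by (intro sum.cong) auto
  also have "\<dots> = F p \<tau>" using assms(1) by simp
  finally show ?thesis .
qed

lemma sum_nested_single:
  fixes v :: "'v::comm_monoid_add"
  assumes "finite A" "finite B" "\<And>a. finite (C a)" "a0 \<in> A" "b0 \<in> B" "c0 \<in> C a0"
  shows "(\<Sum>a\<in>A. \<Sum>b\<in>B. \<Sum>c\<in>C a. if a = a0 \<and> b = b0 \<and> c = c0 then v else 0) = v"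
proof -
  have "(\<Sum>c\<in>C a. if a = a0 \<and> b = b0 \<and> c = c0 then v else 0)
      = (if a = a0 then if b = b0 then v else 0 else 0)" for a b
    using assms by (cases "a = a0 \<and> b = b0") auto
  moreover have "(\<Sum>b\<in>B. if a = a0 then if b = b0 then v else 0 else 0) = (if a = a0 then v else 0)" for a
    using assms by (cases "a = a0") auto
  ultimately show ?thesis using assms by simp
qed

fun at_spin :: "spin \<Rightarrow> loc \<times> loc \<Rightarrow> loc" where
  "at_spin Up p = fst p" | "at_spin Dn p = snd p"

lemma pair_eq_Im_Im_iff: "p = (Im, Im) \<longleftrightarrow> at_spin Up p = Im \<and> at_spin Dn p = Im"
  by (cases p) simp

lemma mode_eq_iff: "mode L a s = mode L b s' \<longleftrightarrow> a mod L = b mod L \<and> s = s'"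
proof -
  have "2 * x + (case s of Up \<Rightarrow> 0 | Dn \<Rightarrow> 1) = 2 * y + (case s' of Up \<Rightarrow> 0 | Dn \<Rightarrow> 1)
      \<longleftrightarrow> x = y \<and> s = s'" for x y :: nat
    by (cases s; cases s'; simp; presburger)
  then show ?thesis unfolding mode_def by blast
qed

lemma mode_mod [simp]: "mode L (n mod L) s = mode L n s"
  by (simp add: mode_eq_iff)

lemma mode_mod_Suc [simp]: "mode L (Suc (n mod L)) s = mode L (Suc n) s"
  by (simp add: mode_eq_iff mod_Suc_eq)

lemma eq_if_mod_eq_close:
  fixes x y L :: nat
  assumes "x mod L = y mod L" "x < y + L" "y < x + L"
  shows "x = y"
proof (cases "x \<le> y")
  case True
  then have "L dvd (y - x)" using assms(1) mod_eq_dvd_iff_nat[OF True, of L] by simp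
  moreover have "y - x < L" using assms(2,3) True by linarith
  ultimately show ?thesis using True by (metis dvd_imp_le le_antisym neq0_conv not_less zero_less_diff)
next
  case False
  then have "L dvd (x - y)" using assms(1) mod_eq_dvd_iff_nat[of y x L] by simp
  moreover have "x - y < L" using assms(2,3) False by linarith
  ultimately show ?thesis using False by (metis dvd_imp_le neq0_conv not_less zero_less_diff)
qed

lemma site_mod_eq_iff:
  fixes i a b L :: nat
  assumes "a < b + L" "b < a + L"
  shows "(i + a) mod L = (i + b) mod L \<longleftrightarrow> a = b"
  using eq_if_mod_eq_close[of "i + a" L "i + b"] assms by auto

lemma mode_site_eq_iff:
  assumes "a < b + L" "b < a + L"
  shows "mode L (i + a) s = mode L (i + b) s' \<longleftrightarrow> a = b \<and> s = s'"
  using site_mod_eq_iff[OF assms] by (auto simp: mode_eq_iff)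

lemma mod_add_right_cancel:
  fixes a b c L :: nat
  assumes "(a + c) mod L = (b + c) mod L"
  shows "a mod L = b mod L"
proof (cases "a \<le> b")
  case True
  with assms have "L dvd (b - a)" using mod_eq_dvd_iff_nat[of "a + c" "b + c" L] by simp
  with True show ?thesis using mod_eq_dvd_iff_nat[OF True, of L] by simp
next
  case False
  with assms have "L dvd (a - b)" using mod_eq_dvd_iff_nat[of "b + c" "a + c" L] by simp
  with False show ?thesis using mod_eq_dvd_iff_nat[of b a L] by simp
qed

lemma mod_add_right_cong:
  fixes a b c L :: nat
  shows "a mod L = b mod L \<Longrightarrow> (a + c) mod L = (b + c) mod L"
  by (metis mod_add_left_eq)

lemma factors_at_chain_word:
  "factors_at (chain_word L j s xs) m =
     map (\<lambda>t. xs ! t) (filter (\<lambda>t. mode L (j + t) s = m \<and> xs ! t \<noteq> Im) [0..<length xs])"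
  by (simp add: factors_at_def chain_word_def filter_map comp_def)

lemma filter_upt_single:
  assumes "\<And>t. t < l \<Longrightarrow> P t \<longleftrightarrow> t = t0 \<and> C" "t0 < l"
  shows "filter P [0..<l] = (if C then [t0] else [])"
proof -
  have "[0..<l] = [0..<t0] @ t0 # [Suc t0..<l]"
    using upt_add_eq_append[of 0 t0 "l - t0"] assms(2) by (simp add: upt_conv_Cons)
  moreover have "filter P [0..<t0] = []" "filter P [Suc t0..<l] = []"
    using assms by (auto simp: filter_empty_conv)
  ultimately show ?thesis using assms by auto
qed

lemma factors_at_basis_word_at:
  assumes "t < length es" "length es \<le> L"
  shows "factors_at (basis_word L j es) (mode L (j + t) s) =
    (if at_spin s (es ! t) \<noteq> Im then [at_spin s (es ! t)] else [])"
proof -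
  have chain: "factors_at (chain_word L j s' xs) (mode L (j + t) s) =
      (if s' = s \<and> xs ! t \<noteq> Im then [xs ! t] else [])" if "length xs = length es" for s' xs
  proof -
    have "filter (\<lambda>t'. mode L (j + t') s' = mode L (j + t) s \<and> xs ! t' \<noteq> Im) [0..<length xs]
        = (if s' = s \<and> xs ! t \<noteq> Im then [t] else [])"
      by (rule filter_upt_single) (use assms that site_mod_eq_iff in \<open>auto simp: mode_eq_iff\<close>)
    then show ?thesis by (simp add: factors_at_chain_word)
  qed
  have "factors_at (filter (\<lambda>p. snd p \<noteq> Im) W) m = factors_at W m" for W m
    unfolding factors_at_def filter_filter by (metis (no_types, lifting) filter_cong)
  then show ?thesis
    using chain[of "map fst es" Up] chain[of "map snd es" Dn] assms
    by (cases s) (simp_all add: basis_word_def)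
qed

lemma factors_at_basis_word_outside:
  assumes "\<And>t s. t < length es \<Longrightarrow> m \<noteq> mode L (j + t) s"
  shows "factors_at (basis_word L j es) m = []"
  using assms by (force simp: basis_word_def factors_at_def chain_word_def filter_empty_conv)

lemma factor_at_basis_word:
  assumes "t < length es" "length es \<le> L"
  shows "factor_at (basis_word L j es) (mode L (j + t) s) = at_spin s (es ! t)"
  using factors_at_basis_word_at[OF assms] by (auto simp: factor_at_def)

lemma factor_at_basis_word_nontrivial:
  assumes "factor_at (basis_word L j es) m \<noteq> Im"
  obtains t s where "t < length es" "m = mode L (j + t) s"
  using factors_at_basis_word_outside assms factor_at_if_Nil by blast

lemma simple_basis_word:
  assumes "length es \<le> L"
  shows "simple_word (basis_word L j es)"
  unfolding simple_word_def
proof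
  fix m
  show "length (factors_at (basis_word L j es) m) \<le> 1"
  proof (cases "\<exists>t s. t < length es \<and> m = mode L (j + t) s")
    case True
    then show ?thesis using factors_at_basis_word_at[OF _ assms] by auto
  next
    case False
    then show ?thesis using factors_at_basis_word_outside[of es m L j] by auto
  qed
qed

lemma supp_elems_length: "es \<in> supp_elems l \<Longrightarrow> length es = l"
  by (simp add: supp_elems_def)

lemma supp_elems_first_last:
  assumes "es \<in> supp_elems l"
  shows "es ! 0 \<noteq> (Im, Im)" and "es ! (l - 1) \<noteq> (Im, Im)"
proof -
  have "es \<noteq> []" using assms by (auto simp: supp_elems_def)
  then show "es ! 0 \<noteq> (Im, Im)" "es ! (l - 1) \<noteq> (Im, Im)"
    using assms by (auto simp: supp_elems_def hd_conv_nth last_conv_nth)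
qed

lemma finite_supp_elems: "finite (supp_elems l)"
proof (rule finite_subset)
  show "supp_elems l \<subseteq> {es. set es \<subseteq> all_locs \<and> length es = l}" by (auto simp: supp_elems_def)
  show "finite {es. set es \<subseteq> all_locs \<and> length es = l}"
    by (rule finite_lists_length_eq) (simp add: all_locs_def)
qed

definition single_fermion :: "loc \<times> loc \<Rightarrow> bool" where
  "single_fermion p \<longleftrightarrow> (fermionic (fst p) \<and> snd p = Im) \<or> (fst p = Im \<and> fermionic (snd p))"

definition in_window :: "nat \<Rightarrow> nat \<Rightarrow> nat \<Rightarrow> nat \<Rightarrow> bool" where
  "in_window L j l n \<longleftrightarrow> (\<exists>t<l. (j + t) mod L = n mod L)"

lemma in_window_mod_cong: "n mod L = n' mod L \<Longrightarrow> in_window L j l n \<longleftrightarrow> in_window L j l n'"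
  by (simp add: in_window_def)

lemma in_window_far_apart:
  assumes "in_window L j l (i + d1)" "in_window L j l (i + d2)"
    and "l \<le> k" "d1 + k \<le> d2" "d2 + k \<le> d1 + L"
  shows False
proof -
  obtain t1 t2 where t: "t1 < l" "t2 < l"
    "(j + t1) mod L = (i + d1) mod L" "(j + t2) mod L = (i + d2) mod L"
    using assms(1,2) by (auto simp: in_window_def)
  have "(i + d1 + t2) mod L = (j + t1 + t2) mod L"
    using mod_add_right_cong[OF t(3)[symmetric], of t2] by simp
  also have "\<dots> = (j + t2 + t1) mod L" by (simp add: ac_simps)
  also have "\<dots> = (i + d2 + t1) mod L" using mod_add_right_cong[OF t(4), of t1] by simp
  finally have "i + d1 + t2 = i + d2 + t1" by (rule eq_if_mod_eq_close) (use assms t in linarith)+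
  then show False using assms t by linarith
qed

lemma in_window_start:
  assumes "j mod L = (n + d) mod L" "in_window L j l n" "d < k" "l \<le> k" "2 * k \<le> L" "j < L"
  shows "j = n mod L"
proof -
  obtain t where t: "t < l" "(j + t) mod L = n mod L" using assms(2) by (auto simp: in_window_def)
  have "(n + d + t) mod L = n mod L" using mod_add_right_cong[OF assms(1)[symmetric], of t] t(2) by simp
  then have "n + d + t = n" by (rule eq_if_mod_eq_close) (use assms t in linarith)+
  then show ?thesis using assms(1,6) by simp
qed

text \<open>\<open>aX\<close> and \<open>aB\<close> stand for the factor maps of the probe (introduced below) and of a basis
  word of support \<open>l \<le> k\<close> starting at site \<open>j\<close>. As \<open>2 k < L\<close>, the window of the basis word
  cannot contain both end sites \<open>i\<close> and \<open>i + k\<close> of the probe.\<close>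

locale window_overlap =
  fixes L k i j l :: nat and \<sigma> s0 :: spin and aX aB :: "nat \<Rightarrow> loc"
  assumes ring: "2 * k + 2 \<le> L" "3 \<le> k" "i < L" "j < L" "l \<le> k"
    and X_end: "aX (mode L (i + k) \<sigma>) \<noteq> Im"
    and X_end_spin: "\<And>s. aX (mode L (i + k) s) \<noteq> Im \<Longrightarrow> s = \<sigma>"
    and X_support: "\<And>m. aX m \<noteq> Im \<Longrightarrow> \<exists>d s. d \<le> k \<and> m = mode L (i + d) s"
    and X_start: "aX (mode L i s0) \<noteq> Im"
    and B_support: "\<And>m. aB m \<noteq> Im \<Longrightarrow> \<exists>t s. t < l \<and> m = mode L (j + t) s"
    and B_start: "\<exists>s. aB (mode L j s) \<noteq> Im"
begin

lemma in_window_if_nontrivial: "aB (mode L n s) \<noteq> Im \<Longrightarrow> in_window L j l n"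
  using B_support[of "mode L n s"] by (auto simp: in_window_def mode_eq_iff)

lemma not_in_window_both_ends: "in_window L j l i \<Longrightarrow> in_window L j l (i + k) \<Longrightarrow> False"
  using in_window_far_apart[of L j l i 0 k k] ring by simp

lemma window_start:
  assumes "\<And>m. aB m \<noteq> Im \<Longrightarrow> \<exists>d s. d < k \<and> m = mode L (n + d) s" "in_window L j l n"
  shows "j = n mod L"
proof -
  obtain s d s' where "d < k" "mode L j s = mode L (n + d) s'"
    using B_start assms(1) by blast
  then show ?thesis using in_window_start[OF _ assms(2)] ring by (simp add: mode_eq_iff)
qed

lemma window_length_from_next_site:
  assumes "j = (i + 1) mod L" "in_window L j l (i + k)"
  shows "l = k"
proof -
  obtain t where t: "t < l" "(j + t) mod L = (i + k) mod L" using assms(2) by (auto simp: in_window_def)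
  with assms(1) have "(i + 1 + t) mod L = (i + k) mod L" by (simp add: mod_add_left_eq)
  then have "i + 1 + t = i + k" by (rule eq_if_mod_eq_close) (use t ring in linarith)+
  with t ring show ?thesis by linarith
qed

lemma mode_start_ne_end: "mode L i s \<noteq> mode L (i + k) s'"
  using mode_site_eq_iff[of 0 k L i s s'] ring by simp

text \<open>A product of two \<open>z\<close> factors on one site cannot connect a basis word to the probe:
  it would have to supply a factor at one of the two end sites.\<close>

lemma interaction_contact_impossible:
  assumes X_end_not_z: "aX (mode L (i + k) \<sigma>) \<noteq> Zm"
    and agree: "\<And>m. m \<noteq> mode L j' Up \<Longrightarrow> m \<noteq> mode L j' Dn \<Longrightarrow> aB m = aX m"
    and empty: "\<And>s. aB (mode L j' s) = Im \<Longrightarrow> aX (mode L j' s) = Zm"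
    and contact: "aB (mode L j' Up) \<noteq> Im \<or> aB (mode L j' Dn) \<noteq> Im"
  shows False
proof -
  have at_j': "m = mode L j' Up \<or> m = mode L j' Dn \<longleftrightarrow> (\<exists>s. m = mode L j' s)" for m
    by (metis spin.exhaust)
  show False
  proof (cases "\<exists>s. mode L (i + k) \<sigma> = mode L j' s")
    case True
    then obtain s where s: "mode L (i + k) \<sigma> = mode L j' s" ..
    then have "aB (mode L (i + k) \<sigma>) \<noteq> Im" using empty[of s] X_end X_end_not_z by auto
    then have end_in: "in_window L j l (i + k)" by (rule in_window_if_nontrivial)
    have "mode L i s0 \<noteq> mode L j' s'" for s'
      using s mode_start_ne_end by (auto simp: mode_eq_iff)
    then have "aB (mode L i s0) \<noteq> Im" using agree X_start by metis
    then show False using not_in_window_both_ends end_in in_window_if_nontrivial by blast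
  next
    case False
    then have "aB (mode L (i + k) \<sigma>) \<noteq> Im" using agree X_end at_j' by metis
    then have end_in: "in_window L j l (i + k)" by (rule in_window_if_nontrivial)
    then have start_out: "\<not> in_window L j l i" using not_in_window_both_ends by blast
    then have "aB (mode L i s0) = Im" using in_window_if_nontrivial by blast
    then obtain s where "mode L i s0 = mode L j' s" using agree X_start at_j' by metis
    moreover obtain s' where "aB (mode L j' s') \<noteq> Im" using contact by blast
    ultimately show False
      using start_out in_window_if_nontrivial in_window_mod_cong by (metis mode_eq_iff)
  qed
qed

end

text \<open>The assumptions are what a nonvanishing pairing of the probe with the commutator of the
  basis word and a hopping term on the bond \<open>(j', j' + 1)\<close> in spin \<open>s'\<close> forces.\<close>

locale hop_contact = window_overlap +
  fixes j' :: nat and s' :: spin and e1 :: loc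
  assumes j'_less: "j' < L"
    and agree: "\<And>m. m \<noteq> mode L j' s' \<Longrightarrow> m \<noteq> mode L (j' + 1) s' \<Longrightarrow> aB m = aX m"
    and first_empty: "aB (mode L j' s') = Im \<Longrightarrow> aX (mode L j' s') = e1"
    and contact: "aB (mode L j' s') \<noteq> Im \<or> aB (mode L (j' + 1) s') \<noteq> Im"
begin

lemma start_in_window_if_start_off_bond:
  assumes "mode L i s0 \<noteq> mode L j' s'" "mode L i s0 \<noteq> mode L (j' + 1) s'"
  shows "in_window L j l i"
  using agree[OF assms] X_start in_window_if_nontrivial by metis

lemma hop_onto_probe_end:
  assumes y: "mode L (i + k) \<sigma> = mode L (j' + 1) s'"
  shows "j' = (i + k - 1) mod L \<and> s' = \<sigma> \<and> j = i \<and> aB (mode L (i + k) \<sigma>) = Im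
    \<and> aB (mode L (i + k - 1) \<sigma>) \<noteq> Im"
proof -
  have k: "i + k - 1 + 1 = i + k" "k - 1 < k" using ring by linarith+
  have s': "s' = \<sigma>" and "(i + k - 1 + 1) mod L = (j' + 1) mod L" using y k by (auto simp: mode_eq_iff)
  then have j': "j' mod L = (i + k - 1) mod L" by (metis mod_add_right_cancel)
  have x: "mode L j' s' = mode L (i + (k - 1)) \<sigma>" using j' s' k by (simp add: mode_eq_iff)
  have "mode L i s0 \<noteq> mode L j' s'"
    using x mode_site_eq_iff[of 0 "k - 1" L i s0 \<sigma>] ring by simp
  then have start_in: "in_window L j l i"
    using start_in_window_if_start_off_bond y mode_start_ne_end by metis
  then have y_empty: "aB (mode L (i + k) \<sigma>) = Im"
    using not_in_window_both_ends in_window_if_nontrivial by blast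
  then have x_full: "aB (mode L j' s') \<noteq> Im" using contact y by simp
  have "j = (i + 0) mod L"
  proof (rule window_start)
    fix m assume m: "aB m \<noteq> Im"
    show "\<exists>d s. d < k \<and> m = mode L (i + 0 + d) s"
    proof (cases "m = mode L j' s'")
      case True
      with x k show ?thesis by (intro exI[of _ "k - 1"] exI[of _ \<sigma>]) simp
    next
      case False
      with m y_empty y have "aX m \<noteq> Im" using agree by metis
      then obtain d s where "d \<le> k" "m = mode L (i + d) s" using X_support by blast
      moreover have "d \<noteq> k" using X_end_spin \<open>aX m \<noteq> Im\<close> m y_empty calculation by auto
      ultimately show ?thesis by (intro exI[of _ d]) auto
    qed
  qed (use start_in in simp)
  with j' x_full x y_empty s' ring j'_less show ?thesis by (simp add: k)
qed

lemma hop_not_off_probe_end: "mode L (i + k) \<sigma> \<noteq> mode L j' s'"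
proof
  assume y: "mode L (i + k) \<sigma> = mode L j' s'"
  then have yj: "(i + k) mod L = j' mod L" by (simp add: mode_eq_iff)
  have "mode L i s0 \<noteq> mode L (j' + 1) s'"
  proof
    assume "mode L i s0 = mode L (j' + 1) s'"
    then have "(i + 0) mod L = (i + (k + 1)) mod L"
      using mod_add_right_cong[OF yj, of 1] by (simp add: mode_eq_iff)
    then show False using site_mod_eq_iff[of 0 "k + 1" L i] ring by simp
  qed
  then have start_in: "in_window L j l (i + 0)"
    using start_in_window_if_start_off_bond y mode_start_ne_end by (metis add_0_right)
  show False
  proof (cases "aB (mode L j' s') = Im")
    case True
    then have "in_window L j l (j' + 1)" using contact in_window_if_nontrivial by blast
    then have "in_window L j l (i + (k + 1))"
      using in_window_mod_cong mod_add_right_cong[OF yj, of 1] by (metis add.assoc)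
    then show False using in_window_far_apart[OF start_in, of "k + 1" k] ring by simp
  next
    case False
    then have "in_window L j l (i + k)" using in_window_if_nontrivial in_window_mod_cong yj by metis
    then show False using not_in_window_both_ends start_in by simp
  qed
qed

lemma bond_off_probe_end:
  assumes "mode L (i + k) \<sigma> \<noteq> mode L (j' + 1) s'"
  shows "in_window L j l (i + k)" and "aB (mode L i s) = Im"
proof -
  show end_in: "in_window L j l (i + k)"
    using agree[OF hop_not_off_probe_end assms] X_end in_window_if_nontrivial by metis
  show "aB (mode L i s) = Im" using not_in_window_both_ends[OF _ end_in] in_window_if_nontrivial by blast
qed

lemma hop_not_onto_probe_start:
  assumes "mode L (i + k) \<sigma> \<noteq> mode L (j' + 1) s'"
  shows "mode L i s0 \<noteq> mode L (j' + 1) s'"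
proof
  assume mu: "mode L i s0 = mode L (j' + 1) s'"
  then have "(j' + 1) mod L = (i + (L - 1) + 1) mod L" using ring by (simp add: mode_eq_iff)
  then have "j' mod L = (i + (L - 1)) mod L" by (rule mod_add_right_cancel)
  moreover have "aB (mode L j' s') \<noteq> Im"
    using contact bond_off_probe_end(2)[OF assms, of s0] mu by simp
  ultimately have "in_window L j l (i + (L - 1))" using in_window_if_nontrivial in_window_mod_cong by metis
  then show False
    by (rule in_window_far_apart[OF bond_off_probe_end(1)[OF assms], where k = k])
      (use ring in linarith)+
qed

lemma hop_off_probe_start:
  assumes "mode L (i + k) \<sigma> \<noteq> mode L (j' + 1) s'" "mode L i s0 = mode L j' s'"
  shows "j' = i \<and> s' = s0 \<and> aX (mode L i s0) = e1 \<and> (\<forall>s. s \<noteq> s0 \<longrightarrow> aX (mode L i s) = Im)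
    \<and> j = Suc i mod L \<and> l = k \<and> aB (mode L i s0) = Im \<and> aB (mode L (Suc i) s0) \<noteq> Im"
proof -
  note end_in = bond_off_probe_end(1)[OF assms(1)] and start_empty = bond_off_probe_end(2)[OF assms(1)]
  have j': "j' = i" "s' = s0" using assms(2) ring j'_less by (auto simp: mode_eq_iff)
  have next_full: "aB (mode L (i + 1) s0) \<noteq> Im" using contact start_empty j' by auto
  have next_ne: "mode L i s \<noteq> mode L (i + 1) s'" for s s'
    using mode_site_eq_iff[of 0 1 L i] ring by simp
  have others: "aX (mode L i s) = Im" if "s \<noteq> s0" for s
    using agree[of "mode L i s"] start_empty[of s] next_ne that j' by (simp add: mode_eq_iff)
  have "j = (i + 1) mod L"
  proof (rule window_start)
    fix m assume m: "aB m \<noteq> Im"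
    show "\<exists>d s. d < k \<and> m = mode L (i + 1 + d) s"
    proof (cases "m = mode L (i + 1) s0")
      case True
      then show ?thesis using ring by (intro exI[of _ 0]) auto
    next
      case False
      moreover have "m \<noteq> mode L i s0" using m start_empty by auto
      ultimately have "aX m \<noteq> Im" using agree m j' by simp
      then obtain d s where d: "d \<le> k" "m = mode L (i + d) s" using X_support by blast
      moreover have "d \<noteq> 0"
      proof
        assume "d = 0"
        with d m start_empty show False by simp
      qed
      ultimately show ?thesis by (intro exI[of _ "d - 1"] exI[of _ s]) auto
    qed
  qed (use next_full in_window_if_nontrivial in simp)
  moreover from this have "l = k" using end_in by (rule window_length_from_next_site)
  ultimately show ?thesis using first_empty start_empty next_full others j' by simp
qed

theorem hop_contact_cases:
  "(j' = (i + k - 1) mod L \<and> s' = \<sigma> \<and> j = i \<and> aB (mode L (i + k) \<sigma>) = Im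
      \<and> aB (mode L (i + k - 1) \<sigma>) \<noteq> Im) \<or>
   (j' = i \<and> s' = s0 \<and> aX (mode L i s0) = e1 \<and> (\<forall>s. s \<noteq> s0 \<longrightarrow> aX (mode L i s) = Im)
      \<and> j = Suc i mod L \<and> l = k \<and> aB (mode L i s0) = Im \<and> aB (mode L (Suc i) s0) \<noteq> Im)"
proof (cases "mode L (i + k) \<sigma> = mode L (j' + 1) s'")
  case True
  then show ?thesis using hop_onto_probe_end by blast
next
  case False
  then have "mode L i s0 = mode L j' s'"
    using agree X_start bond_off_probe_end(2) hop_not_onto_probe_start by metis
  with False show ?thesis using hop_off_probe_start by blast
qed

end

section \<open>The probe\<close>

definition probe_tail :: "loc \<Rightarrow> nat \<Rightarrow> nat \<Rightarrow> word" where
  "probe_tail e x y = (if e = Zm then [(x, Cd), (y, Cm)] else if e = Cm then [(y, Cm)] else [(y, Cd)])"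

text \<open>The factor \<open>e\<close> of \<open>q\<close> at \<open>last_mode\<close>, its last site in spin \<open>\<sigma>\<close>, hops to \<open>next_mode\<close>
  one site further. The probe is the resulting \<open>k + 1\<close>-support word of \<open>[q, H]\<close>: \<open>U V\<close> is \<open>q\<close>
  without this factor, and \<open>e = z, c, c\<^sup>\<dagger>\<close> turns into \<open>c\<^sup>\<dagger>(last_mode) c(next_mode)\<close>,
  \<open>c(next_mode)\<close>, \<open>c\<^sup>\<dagger>(next_mode)\<close> respectively.\<close>

locale probe_setup =
  fixes L k i :: nat and q :: "(loc \<times> loc) list" and \<sigma> :: spin and U V :: word and e :: loc
  assumes ring: "2 * k + 2 \<le> L" "3 \<le> k" "i < L" and q: "q \<in> supp_elems k"
    and e: "e = at_spin \<sigma> (q ! (k - 1))" "e \<noteq> Im"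
    and split: "basis_word L i q = U @ [(mode L (i + (k - 1)) \<sigma>, e)] @ V"
begin

abbreviation last_mode where "last_mode \<equiv> mode L (i + (k - 1)) \<sigma>"
abbreviation next_mode where "next_mode \<equiv> mode L (i + k) \<sigma>"
abbreviation probe where "probe \<equiv> U @ V @ probe_tail e last_mode next_mode"

lemma q_length: "length q = k"
  using q by (rule supp_elems_length)

lemma L_pos: "0 < L"
  using ring by linarith

lemma simple_q_word: "simple_word (basis_word L i q)"
  using simple_basis_word q_length ring by simp

lemma q_word_in_modes: "word_in_modes L (basis_word L i q)"
  using word_in_modes_basis_word L_pos by simp

lemma factor_at_q_word: "t < k \<Longrightarrow> factor_at (basis_word L i q) (mode L (i + t) s) = at_spin s (q ! t)"
  using factor_at_basis_word[of t q L i s] q_length ring by simp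

lemma q_word_support:
  assumes "factor_at (basis_word L i q) m \<noteq> Im"
  obtains t s where "t < k" "m = mode L (i + t) s"
  using factor_at_basis_word_nontrivial[OF assms] q_length by metis

lemma last_mode_ne_next_mode: "last_mode \<noteq> next_mode"
  using mode_site_eq_iff[of "k - 1" k L i \<sigma> \<sigma>] ring by simp

lemma last_mode_less: "last_mode < 2 * L" and next_mode_less: "next_mode < 2 * L"
  using mode_less L_pos by auto

lemma q_word_next_mode: "factor_at (basis_word L i q) next_mode = Im"
proof (rule ccontr)
  assume "factor_at (basis_word L i q) next_mode \<noteq> Im"
  then obtain t s where "t < k" "next_mode = mode L (i + t) s" by (rule q_word_support)
  then show False using mode_site_eq_iff[of k t L i \<sigma> s] ring by simp
qed

lemma q_word_hop_setup: "hop_setup L (basis_word L i q) U V last_mode next_mode e"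
proof (rule hop_setup.intro)
  show nontrivial: "\<forall>p\<in>set (basis_word L i q). snd p \<noteq> Im"
    using basis_word_nontrivial by blast
  show "\<forall>p\<in>set (basis_word L i q). fst p \<noteq> next_mode"
    using q_word_next_mode nontrivial by (simp add: factor_at_eq_Im_iff factors_at_eq_Nil_iff)
qed (use split simple_q_word q_word_in_modes last_mode_ne_next_mode last_mode_less next_mode_less
    e(2) in simp_all)

sublocale q_hop: hop_setup L "basis_word L i q" U V last_mode next_mode e
  by (rule q_word_hop_setup)

lemma factors_at_rest:
  "factors_at (U @ V) m = (if m = last_mode then [] else factors_at (basis_word L i q) m)"
  using q_hop.rest_avoids
  by (auto simp: split factors_at_Cons factors_at_def filter_empty_conv)

lemma factor_at_probe: "factor_at probe m =
    (if m = last_mode then (if e = Zm then Cd else Im)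
     else if m = next_mode then (if e = Cd then Cd else Cm)
     else factor_at (basis_word L i q) m)"
proof -
  have tail: "factors_at (probe_tail e last_mode next_mode) m =
      (if m = last_mode then (if e = Zm then [Cd] else [])
       else if m = next_mode then [if e = Cd then Cd else Cm] else [])"
    using last_mode_ne_next_mode e(2) by (cases e) (auto simp: probe_tail_def factors_at_def)
  have "factors_at (U @ V) next_mode = []"
    using factors_at_rest q_word_next_mode last_mode_ne_next_mode by (simp add: factor_at_eq_Im_iff)
  then show ?thesis
    using factors_at_rest[of m] tail last_mode_ne_next_mode
    by (auto simp: factor_at_append factor_at_def)
qed

lemma probe_in_modes: "word_in_modes L probe"
  using q_hop.rest_in_modes last_mode_less next_mode_less by (simp add: probe_tail_def)

lemma simple_probe: "simple_word probe"
  unfolding simple_word_def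
proof
  fix m
  have "length (factors_at (U @ V) m) \<le> 1"
    using factors_at_rest[of m] simple_q_word by (simp add: simple_word_def)
  moreover have "factors_at (probe_tail e last_mode next_mode) m = [] \<or> factors_at (U @ V) m = []"
    using factors_at_rest[of m] q_word_next_mode last_mode_ne_next_mode
    by (auto simp: probe_tail_def factors_at_def factor_at_eq_Im_iff)
  moreover have "length (factors_at (probe_tail e last_mode next_mode) m) \<le> 1"
    using last_mode_ne_next_mode by (auto simp: probe_tail_def factors_at_def)
  ultimately show "length (factors_at probe m) \<le> 1" by auto
qed

lemma probe_next_mode: "factor_at probe next_mode \<noteq> Im" "factor_at probe next_mode \<noteq> Zm"
  using factor_at_probe[of next_mode] last_mode_ne_next_mode by auto

lemma probe_support:
  assumes "factor_at probe m \<noteq> Im"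
  shows "\<exists>d s. d \<le> k \<and> m = mode L (i + d) s"
proof (cases "m = last_mode \<or> m = next_mode")
  case True
  then show ?thesis by (metis diff_le_self order_refl)
next
  case False
  then have "factor_at (basis_word L i q) m \<noteq> Im" using assms factor_at_probe[of m] by simp
  then show ?thesis by (metis less_imp_le_nat q_word_support)
qed

lemma mode_ne_last_mode: "t < k - 1 \<Longrightarrow> mode L (i + t) s \<noteq> last_mode"
  using mode_site_eq_iff[of t "k - 1" L i s \<sigma>] ring by auto

lemma mode_end_ne_last_mode: "mode L (i + k) s \<noteq> last_mode"
  using mode_site_eq_iff[of k "k - 1" L i s \<sigma>] ring by auto

lemma probe_end_spin:
  assumes "factor_at probe (mode L (i + k) s) \<noteq> Im"
  shows "s = \<sigma>"
proof (rule ccontr)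
  assume "s \<noteq> \<sigma>"
  moreover note mode_end_ne_last_mode[of s]
  ultimately have "factor_at (basis_word L i q) (mode L (i + k) s) \<noteq> Im"
    using assms factor_at_probe by (simp add: mode_eq_iff)
  then obtain t s' where "t < k" "mode L (i + k) s = mode L (i + t) s'" by (rule q_word_support)
  then show False using mode_site_eq_iff[of k t L i] ring by simp
qed

lemma factor_at_probe_site:
  assumes "t < k" "mode L (i + t) s \<noteq> last_mode"
  shows "factor_at probe (mode L (i + t) s) = at_spin s (q ! t)"
proof -
  have "mode L (i + t) s \<noteq> next_mode" using mode_site_eq_iff[of t k L i] assms ring by simp
  then show ?thesis using assms factor_at_probe factor_at_q_word by simp
qed

lemma factor_at_probe_first_sites:
  "factor_at probe (mode L i s) = at_spin s (q ! 0)"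
  "factor_at probe (mode L (Suc i) s) = at_spin s (q ! 1)"
proof -
  have "factor_at probe (mode L (i + t) s) = at_spin s (q ! t)" if "t < k - 1" for t
    using factor_at_probe_site mode_ne_last_mode that by simp
  from this[of 0] this[of 1] ring show "factor_at probe (mode L i s) = at_spin s (q ! 0)"
    "factor_at probe (mode L (Suc i) s) = at_spin s (q ! 1)" by simp_all
qed


lemma window_overlap_basis_word:
  assumes b: "l \<in> {1..k}" "j < L" "es \<in> supp_elems l"
    and s0: "factor_at probe (mode L i s0) \<noteq> Im"
  shows "window_overlap L k i j l \<sigma> s0 (factor_at probe) (factor_at (basis_word L j es))"
proof (rule window_overlap.intro)
  have len: "length es = l" using b(3) by (rule supp_elems_length)
  show "\<And>m. factor_at (basis_word L j es) m \<noteq> Im \<Longrightarrow> \<exists>t s. t < l \<and> m = mode L (j + t) s"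
    using factor_at_basis_word_nontrivial len by metis
  obtain s where "at_spin s (es ! 0) \<noteq> Im"
    using supp_elems_first_last(1)[OF b(3)] pair_eq_Im_Im_iff by blast
  moreover have "factor_at (basis_word L j es) (mode L (j + 0) s) = at_spin s (es ! 0)"
    using factor_at_basis_word[of 0 es L j s] len b(1) ring by simp
  ultimately show "\<exists>s. factor_at (basis_word L j es) (mode L j s) \<noteq> Im"
    by (intro exI[of _ s]) simp
qed (use ring b(1,2) s0 probe_next_mode probe_end_spin probe_support in auto)

definition right_partner :: "nat \<Rightarrow> word \<Rightarrow> bool" where
  "right_partner j B \<longleftrightarrow> j = i \<and> factor_at B next_mode = Im \<and> factor_at B last_mode \<noteq> Im \<and>
     (\<forall>m. m \<noteq> last_mode \<longrightarrow> m \<noteq> next_mode \<longrightarrow> factor_at B m = factor_at probe m)"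

definition left_partner :: "spin \<Rightarrow> nat \<Rightarrow> nat \<Rightarrow> word \<Rightarrow> bool" where
  "left_partner s0 l j B \<longleftrightarrow> fermionic (factor_at probe (mode L i s0)) \<and>
     (\<forall>s. s \<noteq> s0 \<longrightarrow> factor_at probe (mode L i s) = Im) \<and> j = Suc i mod L \<and> l = k \<and>
     factor_at B (mode L i s0) = Im \<and> factor_at B (mode L (Suc i) s0) \<noteq> Im \<and>
     (\<forall>m. m \<noteq> mode L i s0 \<longrightarrow> m \<noteq> mode L (Suc i) s0 \<longrightarrow> factor_at B m = factor_at probe m)"

lemma right_partner_not_left_partner: "right_partner j B \<Longrightarrow> \<not> left_partner s0 l j B"
  using mode_site_eq_iff[of 0 1 L i] ring
  by (auto simp: right_partner_def left_partner_def mode_eq_iff)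

lemma last_bond_modes: "mode L ((i + k - 1) mod L) \<sigma> = last_mode"
  "mode L (Suc ((i + k - 1) mod L)) \<sigma> = next_mode"
  using ring by (simp_all add: Suc_diff_le)

lemma hop_contact_if_pairing_nonzero:
  assumes b: "l \<in> {1..k}" "j < L" "es \<in> supp_elems l"
    and s0: "factor_at probe (mode L i s0) \<noteq> Im" and j': "j' < L"
    and t: "t = hop_word L j' s' \<or> t = hop_word' L j' s'"
    and nz: "comm_pairing L (word_op probe) (basis_word L j es) t \<noteq> 0"
  shows "hop_contact L k i j l \<sigma> s0 (factor_at probe) (factor_at (basis_word L j es)) j' s'
    (if t = hop_word L j' s' then Cd else Cm)"
proof (intro hop_contact.intro window_overlap_basis_word[OF b s0] hop_contact_axioms.intro)
  let ?B = "basis_word L j es"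
  have B: "word_in_modes L ?B" "simple_word ?B"
    using word_in_modes_basis_word simple_basis_word L_pos supp_elems_length[OF b(3)] b(1) ring
    by auto
  have m12: "mode L j' s' \<noteq> mode L (j' + 1) s'" using mode_site_eq_iff[of 0 1 L j'] ring by simp
  have less: "mode L j' s' < 2 * L" "mode L (j' + 1) s' < 2 * L" using mode_less L_pos by auto
  have "(\<forall>m. m \<noteq> mode L j' s' \<longrightarrow> m \<noteq> mode L (j' + 1) s' \<longrightarrow> factor_at ?B m = factor_at probe m) \<and>
      (factor_at ?B (mode L j' s') = Im \<longrightarrow>
        factor_at probe (mode L j' s') = (if t = hop_word L j' s' then Cd else Cm)) \<and>
      (factor_at ?B (mode L j' s') \<noteq> Im \<or> factor_at ?B (mode L (j' + 1) s') \<noteq> Im)"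
    using t
  proof
    assume t: "t = hop_word L j' s'"
    note agrees = comm_pairing_nonzero_agrees[OF probe_in_modes simple_probe B m12 _ _ less, of Cd Cm]
    show ?thesis
      using agrees nz comm_pairing_nonzero_touches[OF B(1) _ less, of Cd Cm] basis_word_nontrivial
      by (auto simp: t hop_word_def)
  next
    assume t: "t = hop_word' L j' s'"
    note agrees = comm_pairing_nonzero_agrees[OF probe_in_modes simple_probe B m12[symmetric] _ _
        less(2,1), of Cd Cm]
    show ?thesis
      using agrees nz comm_pairing_nonzero_touches[OF B(1) _ less(2,1), of Cd Cm] basis_word_nontrivial
        m12
      by (auto simp: t hop_word_def hop_word'_def)
  qed
  then show "\<And>m. m \<noteq> mode L j' s' \<Longrightarrow> m \<noteq> mode L (j' + 1) s' \<Longrightarrow> factor_at ?B m = factor_at probe m"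
    "factor_at ?B (mode L j' s') = Im \<Longrightarrow>
      factor_at probe (mode L j' s') = (if t = hop_word L j' s' then Cd else Cm)"
    "factor_at ?B (mode L j' s') \<noteq> Im \<or> factor_at ?B (mode L (j' + 1) s') \<noteq> Im"
    by blast+
qed (rule j')

lemma hop_contact_basis_word:
  assumes b: "l \<in> {1..k}" "j < L" "es \<in> supp_elems l"
    and s0: "factor_at probe (mode L i s0) \<noteq> Im" and j': "j' < L"
    and t: "t = hop_word L j' s' \<or> t = hop_word' L j' s'"
    and nz: "comm_pairing L (word_op probe) (basis_word L j es) t \<noteq> 0"
  shows "(j' = (i + k - 1) mod L \<and> s' = \<sigma> \<and> right_partner j (basis_word L j es)) \<or>
    (j' = i \<and> s' = s0 \<and> left_partner s0 l j (basis_word L j es))"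
proof -
  let ?B = "basis_word L j es" and ?e1 = "if t = hop_word L j' s' then Cd else Cm"
  interpret hop_contact L k i j l \<sigma> s0 "factor_at probe" "factor_at ?B" j' s' ?e1
    by (rule hop_contact_if_pairing_nonzero[OF assms])
  show ?thesis
    using hop_contact_cases
  proof
    assume R: "j' = (i + k - 1) mod L \<and> s' = \<sigma> \<and> j = i \<and> factor_at ?B next_mode = Im
      \<and> factor_at ?B (mode L (i + k - 1) \<sigma>) \<noteq> Im"
    then have "mode L j' s' = last_mode" "mode L (j' + 1) s' = next_mode"
      using last_bond_modes ring by (auto simp: Suc_diff_le)
    with R agree show ?thesis by (auto simp: right_partner_def Suc_diff_le)
  next
    assume "j' = i \<and> s' = s0 \<and> factor_at probe (mode L i s0) = ?e1
      \<and> (\<forall>s. s \<noteq> s0 \<longrightarrow> factor_at probe (mode L i s) = Im) \<and> j = Suc i mod L \<and> l = k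
      \<and> factor_at ?B (mode L i s0) = Im \<and> factor_at ?B (mode L (Suc i) s0) \<noteq> Im"
    with agree show ?thesis by (auto simp: left_partner_def)
  qed
qed

lemma interaction_pairing_vanishes:
  assumes b: "l \<in> {1..k}" "j < L" "es \<in> supp_elems l"
    and s0: "factor_at probe (mode L i s0) \<noteq> Im"
  shows "comm_pairing L (word_op probe) (basis_word L j es) (interaction_word L j') = 0"
proof (rule ccontr)
  let ?B = "basis_word L j es"
  interpret window_overlap L k i j l \<sigma> s0 "factor_at probe" "factor_at ?B"
    by (rule window_overlap_basis_word[OF b s0])
  assume nz: "comm_pairing L (word_op probe) ?B (interaction_word L j') \<noteq> 0"
  have B: "word_in_modes L ?B" "simple_word ?B"
    using word_in_modes_basis_word simple_basis_word L_pos supp_elems_length[OF b(3)] b(1) ring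
    by auto
  have ud: "mode L j' Up \<noteq> mode L j' Dn" by (simp add: mode_eq_iff)
  have less: "mode L j' Up < 2 * L" "mode L j' Dn < 2 * L" using mode_less L_pos by auto
  note agrees = comm_pairing_nonzero_agrees[OF probe_in_modes simple_probe B ud _ _ less, of Zm Zm]
  show False
  proof (rule interaction_contact_impossible)
    show "factor_at probe next_mode \<noteq> Zm" by (rule probe_next_mode(2))
    show "\<And>m. m \<noteq> mode L j' Up \<Longrightarrow> m \<noteq> mode L j' Dn \<Longrightarrow> factor_at ?B m = factor_at probe m"
      using agrees nz by (simp add: interaction_word_def)
    show "factor_at ?B (mode L j' s) = Im \<Longrightarrow> factor_at probe (mode L j' s) = Zm" for s
      using agrees nz by (cases s) (simp_all add: interaction_word_def)
    show "factor_at ?B (mode L j' Up) \<noteq> Im \<or> factor_at ?B (mode L j' Dn) \<noteq> Im"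
      using comm_pairing_nonzero_touches[OF B(1) _ less, of Zm Zm] nz basis_word_nontrivial
      by (auto simp: interaction_word_def)
  qed
qed

lemma comm_hubbard_pairing_probe:
  assumes b: "l \<in> {1..k}" "j < L" "es \<in> supp_elems l"
    and s0: "factor_at probe (mode L i s0) \<noteq> Im"
  shows "comm_hubbard_pairing L Ur (word_op probe) (basis_word L j es) =
    (\<Sum>j'<L. \<Sum>s\<in>{Up, Dn}. -2 * bond_pairing L (word_op probe) (basis_word L j es) j' s)"
  unfolding comm_hubbard_pairing_def using interaction_pairing_vanishes[OF b s0] by simp

lemma bond_pairing_vanishes:
  assumes b: "l \<in> {1..k}" "j < L" "es \<in> supp_elems l"
    and s0: "factor_at probe (mode L i s0) \<noteq> Im" and j': "j' < L"
    and not_right: "\<not> (j' = (i + k - 1) mod L \<and> s' = \<sigma> \<and> right_partner j (basis_word L j es))"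
    and not_left: "\<not> (j' = i \<and> s' = s0 \<and> left_partner s0 l j (basis_word L j es))"
  shows "bond_pairing L (word_op probe) (basis_word L j es) j' s' = 0"
proof -
  have "comm_pairing L (word_op probe) (basis_word L j es) t = 0"
    if "t = hop_word L j' s' \<or> t = hop_word' L j' s'" for t
  proof (rule ccontr)
    assume "comm_pairing L (word_op probe) (basis_word L j es) t \<noteq> 0"
    from hop_contact_basis_word[OF b s0 j' that this] not_right not_left show False by blast
  qed
  then show ?thesis by (simp add: bond_pairing_def)
qed

lemma comm_hubbard_pairing_right_partner:
  assumes b: "l \<in> {1..k}" "j < L" "es \<in> supp_elems l"
    and s0: "factor_at probe (mode L i s0) \<noteq> Im" and R: "right_partner j (basis_word L j es)"
  shows "comm_hubbard_pairing L Ur (word_op probe) (basis_word L j es) =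
    -2 * bond_pairing L (word_op probe) (basis_word L j es) ((i + k - 1) mod L) \<sigma>"
  unfolding comm_hubbard_pairing_probe[OF b s0]
proof (rule sum_sites_spins_single)
  fix j' s assume "j' < L" "j' \<noteq> (i + k - 1) mod L \<or> s \<noteq> \<sigma>"
  with bond_pairing_vanishes[OF b s0 \<open>j' < L\<close>, of s] right_partner_not_left_partner[OF R]
  have "bond_pairing L (word_op probe) (basis_word L j es) j' s = 0" by blast
  then show "-2 * bond_pairing L (word_op probe) (basis_word L j es) j' s = 0" by simp
qed (use L_pos in simp)

lemma comm_hubbard_pairing_left_partner:
  assumes b: "l \<in> {1..k}" "j < L" "es \<in> supp_elems l"
    and s0: "factor_at probe (mode L i s0) \<noteq> Im" and Lp: "left_partner s0 l j (basis_word L j es)"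
  shows "comm_hubbard_pairing L Ur (word_op probe) (basis_word L j es) =
    -2 * bond_pairing L (word_op probe) (basis_word L j es) i s0"
  unfolding comm_hubbard_pairing_probe[OF b s0]
proof (rule sum_sites_spins_single)
  fix j' s assume "j' < L" "j' \<noteq> i \<or> s \<noteq> s0"
  moreover have "\<not> right_partner j (basis_word L j es)"
    using Lp right_partner_not_left_partner by blast
  ultimately have "bond_pairing L (word_op probe) (basis_word L j es) j' s = 0"
    using bond_pairing_vanishes[OF b s0 \<open>j' < L\<close>, of s] by blast
  then show "-2 * bond_pairing L (word_op probe) (basis_word L j es) j' s = 0" by simp
qed (use ring in simp)

lemma comm_hubbard_pairing_no_partner:
  assumes b: "l \<in> {1..k}" "j < L" "es \<in> supp_elems l"
    and s0: "factor_at probe (mode L i s0) \<noteq> Im"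
    and "\<not> right_partner j (basis_word L j es)" "\<not> left_partner s0 l j (basis_word L j es)"
  shows "comm_hubbard_pairing L Ur (word_op probe) (basis_word L j es) = 0"
  unfolding comm_hubbard_pairing_probe[OF b s0] using bond_pairing_vanishes[OF b s0] assms(5,6)
  by simp


lemma last_bond_hop_words:
  "hop_word L ((i + k - 1) mod L) \<sigma> = [(last_mode, Cd), (next_mode, Cm)]"
  "hop_word' L ((i + k - 1) mod L) \<sigma> = [(next_mode, Cd), (last_mode, Cm)]"
  using last_bond_modes by (simp_all add: hop_word_def hop_word'_def)

lemma q_word_last_mode: "factor_at (basis_word L i q) last_mode = e"
  using factor_at_q_word[of "k - 1" \<sigma>] e ring by simp

lemma q_right_partner: "right_partner i (basis_word L i q)"
  using q_word_last_mode q_word_next_mode factor_at_probe e(2) by (auto simp: right_partner_def)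

lemma basis_word_eq_q:
  assumes "l \<in> {1..k}" "es \<in> supp_elems l"
    and eq: "\<And>m. factor_at (basis_word L i es) m = factor_at (basis_word L i q) m"
  shows "l = k \<and> es = q"
proof -
  have len: "length es = l" using assms(2) by (rule supp_elems_length)
  have "l = k"
  proof (rule ccontr)
    assume "l \<noteq> k"
    with assms(1) have "l < k" by simp
    obtain s where "at_spin s (q ! (k - 1)) \<noteq> Im"
      using supp_elems_first_last(2)[OF q] pair_eq_Im_Im_iff by blast
    then have "factor_at (basis_word L i es) (mode L (i + (k - 1)) s) \<noteq> Im"
      using eq factor_at_q_word[of "k - 1" s] ring by simp
    then obtain t s' where t: "t < length es" "mode L (i + (k - 1)) s = mode L (i + t) s'"
      by (rule factor_at_basis_word_nontrivial)
    then have "k - 1 = t" using mode_site_eq_iff[of "k - 1" t L i s s'] len \<open>l < k\<close> ring by auto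
    with t(1) len \<open>l < k\<close> show False by linarith
  qed
  moreover have "es = q"
  proof (rule nth_equalityI)
    show "length es = length q" using len q_length \<open>l = k\<close> by simp
    fix t assume "t < length es"
    then have "at_spin s (es ! t) = at_spin s (q ! t)" for s
      using factor_at_basis_word[of t es L i s] factor_at_q_word[of t s] eq len \<open>l = k\<close> ring by simp
    from this[of Up] this[of Dn] show "es ! t = q ! t" by (simp add: prod_eq_iff)
  qed
  ultimately show ?thesis by simp
qed

lemma pairing_probe_mismatch:
  assumes R: "\<forall>p\<in>set R. fst p \<noteq> last_mode \<and> fst p \<noteq> next_mode" "word_in_modes L R"
    and r: "r \<in> {[(last_mode, Cd), (next_mode, Cm)], [(next_mode, Cm)], [(next_mode, Cd)],
      [(next_mode, Cd), (last_mode, Cm)]}"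
    and m: "m \<in> {last_mode, next_mode}" and differ: "factor_at r m \<noteq> factor_at probe m"
  shows "trace_pairing L (word_op probe) (word_op (R @ r)) = 0"
proof (rule trace_pairing_orthogonal[OF probe_in_modes _ simple_probe])
  have "factors_at R m = []" using R(1) m by (auto simp: factors_at_def filter_empty_conv)
  then show "length (factors_at (R @ r) m) \<le> 1" "factor_at (R @ r) m \<noteq> factor_at probe m"
    using r last_mode_ne_next_mode differ by (auto simp: factors_at_def factor_at_append)
  show "word_in_modes L (R @ r)" using R(2) r last_mode_less next_mode_less by auto
qed

lemma factor_at_tails:
  "factor_at [(last_mode, Cd), (next_mode, Cm)] last_mode = Cd"
  "factor_at [(last_mode, Cd), (next_mode, Cm)] next_mode = Cm"
  "factor_at [(next_mode, c)] last_mode = Im" "factor_at [(next_mode, c)] next_mode = c"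
  "factor_at [(next_mode, Cd), (last_mode, Cm)] last_mode = Cm"
  "factor_at [(next_mode, Cd), (last_mode, Cm)] next_mode = Cd"
  using last_mode_ne_next_mode by (auto simp: factor_at_def factors_at_def)

lemma probe_last_next:
  "factor_at probe last_mode = (if e = Zm then Cd else Im)"
  "factor_at probe next_mode = (if e = Cd then Cd else Cm)"
  using factor_at_probe[of last_mode] factor_at_probe[of next_mode] last_mode_ne_next_mode by auto

text \<open>The probe itself appears in the commutator of \<open>q\<close> with the bond \<open>(last_mode, next_mode)\<close>.\<close>

lemma comm_hubbard_pairing_q_nonzero: "comm_hubbard_pairing L Ur (word_op probe) (basis_word L i q) \<noteq> 0"
proof -
  obtain s0 where "at_spin s0 (q ! 0) \<noteq> Im"
    using supp_elems_first_last(1)[OF q] pair_eq_Im_Im_iff by blast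
  then have s0: "factor_at probe (mode L i s0) \<noteq> Im" using factor_at_probe_first_sites by simp
  have k: "k \<in> {1..k}" using ring by simp
  let ?P = "\<lambda>W. trace_pairing L (word_op probe) (word_op W)"
  have self: "?P probe \<noteq> 0" by (rule trace_pairing_self_nonzero[OF simple_probe probe_in_modes])
  have "?P (U @ V @ [(next_mode, Cd), (last_mode, Cm)]) = 0" if "e = Zm"
    using pairing_probe_mismatch[OF q_hop.rest_avoids q_hop.rest_in_modes,
        of "[(next_mode, Cd), (last_mode, Cm)]" last_mode] that factor_at_tails probe_last_next
    by simp
  then have "bond_pairing L (word_op probe) (basis_word L i q) ((i + k - 1) mod L) \<sigma> \<noteq> 0"
    unfolding bond_pairing_def last_bond_hop_words q_hop.comm_pairing_hop_to q_hop.comm_pairing_hop_from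
    using self e(2) pass_sign_nonzero[of e V]
    by (cases e) (simp_all add: probe_tail_def)
  then show ?thesis
    using comm_hubbard_pairing_right_partner[OF k ring(3) q s0 q_right_partner] by simp
qed

lemma comm_hubbard_pairing_other_right_partner:
  assumes b: "l \<in> {1..k}" "j < L" "es \<in> supp_elems l"
    and s0: "factor_at probe (mode L i s0) \<noteq> Im"
    and R: "right_partner j (basis_word L j es)" and ne: "\<not> (l = k \<and> j = i \<and> es = q)"
  shows "comm_hubbard_pairing L Ur (word_op probe) (basis_word L j es) = 0"
proof -
  have j: "j = i" using R by (simp add: right_partner_def)
  let ?B = "basis_word L i es"
  define e' where "e' = factor_at ?B last_mode"
  have e': "e' \<noteq> Im" using R j by (simp add: right_partner_def e'_def)
  have "e' \<noteq> e"
  proof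
    assume "e' = e"
    then have "factor_at ?B m = factor_at (basis_word L i q) m" for m
      using R j q_word_next_mode factor_at_probe[of m] q_word_last_mode
      by (cases "m = last_mode"; cases "m = next_mode") (auto simp: right_partner_def e'_def)
    then show False using basis_word_eq_q[OF b(1,3)] ne j by blast
  qed
  obtain U' V' where split': "?B = U' @ [(last_mode, e')] @ V'"
    using split_at_factor[OF e'_def[symmetric] e'] by blast
  interpret B_hop: hop_setup L ?B U' V' last_mode next_mode e'
  proof (rule hop_setup.intro)
    show "?B = U' @ [(last_mode, e')] @ V'" by (rule split')
    show "simple_word ?B" using simple_basis_word supp_elems_length[OF b(3)] b(1) ring by simp
    show "word_in_modes L ?B" using word_in_modes_basis_word L_pos by simp
    show nontrivial: "\<forall>p\<in>set ?B. snd p \<noteq> Im" using basis_word_nontrivial by blast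
    show "\<forall>p\<in>set ?B. fst p \<noteq> next_mode"
      using R j nontrivial by (simp add: right_partner_def factor_at_eq_Im_iff factors_at_eq_Nil_iff)
  qed (use last_mode_ne_next_mode last_mode_less next_mode_less e' in simp_all)
  note mismatch = pairing_probe_mismatch[OF B_hop.rest_avoids B_hop.rest_in_modes]
  have "bond_pairing L (word_op probe) ?B ((i + k - 1) mod L) \<sigma> = 0"
    unfolding bond_pairing_def last_bond_hop_words B_hop.comm_pairing_hop_to B_hop.comm_pairing_hop_from
    using mismatch[of _ last_mode] mismatch[of _ next_mode] \<open>e' \<noteq> e\<close> e(2)
      factor_at_tails probe_last_next
    by (cases e; cases e') simp_all
  then show ?thesis using comm_hubbard_pairing_right_partner[OF b s0 R] j by simp
qed

lemma left_partner_second_site: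
  assumes b: "es \<in> supp_elems l" and Lp: "left_partner s0 l j (basis_word L j es)"
    and single: "single_fermion (es ! 0)" and second: "q ! 1 \<noteq> (Im, Im)"
  shows "fermionic (factor_at (basis_word L j es) (mode L (Suc i) s0))"
    and "factor_at probe (mode L (Suc i) s0) \<noteq> Im"
proof -
  let ?B = "basis_word L j es"
  have j: "j = Suc i mod L" and nu: "factor_at ?B (mode L (Suc i) s0) \<noteq> Im"
    and agree: "\<And>m. m \<noteq> mode L i s0 \<Longrightarrow> m \<noteq> mode L (Suc i) s0 \<Longrightarrow> factor_at ?B m = factor_at probe m"
    and len: "length es = k"
    using Lp supp_elems_length[OF b] by (auto simp: left_partner_def)
  have first: "factor_at ?B (mode L (Suc i) s) = at_spin s (es ! 0)" for s
    using factor_at_basis_word[of 0 es L j s] len j ring by (simp add: mode_eq_iff)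
  obtain s1 where s1: "s1 \<noteq> s0" by (metis spin.distinct)
  have "fermionic (factor_at ?B (mode L (Suc i) s0))" and empty: "factor_at ?B (mode L (Suc i) s1) = Im"
    using single nu first[of s0] first[of s1] s1
    by (cases s0; cases s1; auto simp: single_fermion_def)+
  then show "fermionic (factor_at ?B (mode L (Suc i) s0))" by simp
  have "mode L (Suc i) s1 \<noteq> mode L i s0" "mode L (Suc i) s1 \<noteq> mode L (Suc i) s0"
    using mode_site_eq_iff[of 1 0 L i] s1 ring by (auto simp: mode_eq_iff)
  then have "at_spin s1 (q ! 1) = Im"
    using agree empty factor_at_probe_first_sites(2) by metis
  with second s1 have "at_spin s0 (q ! 1) \<noteq> Im"
    by (cases s0; cases s1) (auto simp: pair_eq_Im_Im_iff)
  then show "factor_at probe (mode L (Suc i) s0) \<noteq> Im" using factor_at_probe_first_sites(2) by simp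
qed

text \<open>A left partner whose first site carries a single fermion pairs with the probe only through
  the hop on the bond \<open>(i, i + 1)\<close>, which empties the occupied mode of site \<open>i + 1\<close>; the probe
  is nontrivial there.\<close>

lemma comm_hubbard_pairing_single_left_partner:
  assumes b: "l \<in> {1..k}" "j < L" "es \<in> supp_elems l"
    and s0: "factor_at probe (mode L i s0) \<noteq> Im" and Lp: "left_partner s0 l j (basis_word L j es)"
    and single: "single_fermion (es ! 0)" and second: "q ! 1 \<noteq> (Im, Im)"
  shows "comm_hubbard_pairing L Ur (word_op probe) (basis_word L j es) = 0"
proof -
  let ?B = "basis_word L j es"
  let ?\<mu> = "mode L i s0" and ?\<nu> = "mode L (Suc i) s0"
  define g where "g = factor_at ?B ?\<nu>"
  note g = left_partner_second_site(1)[OF b(3) Lp single second, folded g_def]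
  obtain U' V' where split': "?B = U' @ [(?\<nu>, g)] @ V'"
    using split_at_factor[OF g_def[symmetric] fermionic_nontrivial[OF g]] by blast
  interpret B_hop: hop_setup L ?B U' V' ?\<nu> ?\<mu> g
  proof (rule hop_setup.intro)
    show "?B = U' @ [(?\<nu>, g)] @ V'" by (rule split')
    show "simple_word ?B"
      using simple_basis_word supp_elems_length[OF b(3)] b(1) ring by simp
    show "word_in_modes L ?B" using word_in_modes_basis_word L_pos by simp
    show nontrivial: "\<forall>p\<in>set ?B. snd p \<noteq> Im" using basis_word_nontrivial by blast
    show "\<forall>p\<in>set ?B. fst p \<noteq> ?\<mu>"
      using Lp nontrivial by (simp add: left_partner_def factor_at_eq_Im_iff factors_at_eq_Nil_iff)
  qed (use L_pos mode_less mode_site_eq_iff[of 1 0 L i] ring fermionic_nontrivial[OF g] in simp_all)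
  have "bond_pairing L (word_op probe) ?B i s0 = 0"
    using B_hop.comm_pairing_hop_vanishes[OF g probe_in_modes simple_probe
        left_partner_second_site(2)[OF b(3) Lp single second]]
    by (simp add: bond_pairing_def hop_word_def hop_word'_def)
  then show ?thesis using comm_hubbard_pairing_left_partner[OF b s0 Lp] by simp
qed

lemma coeff_pairing_vanishes_off_q:
  assumes b: "l \<in> {1..k}" "j < L" "es \<in> supp_elems l"
    and s0: "factor_at probe (mode L i s0) \<noteq> Im" and ne: "\<not> (l = k \<and> j = i \<and> es = q)"
    and second: "single_fermion (q ! 0) \<Longrightarrow> q ! 1 \<noteq> (Im, Im)"
    and others: "single_fermion (q ! 0) \<Longrightarrow>
      \<forall>j<L. \<forall>es\<in>supp_elems k. \<not> single_fermion (es ! 0) \<longrightarrow> c j es = 0"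
  shows "c j es * comm_hubbard_pairing L Ur (word_op probe) (basis_word L j es) = 0"
proof -
  consider "right_partner j (basis_word L j es)" | "left_partner s0 l j (basis_word L j es)"
    | "\<not> right_partner j (basis_word L j es)" "\<not> left_partner s0 l j (basis_word L j es)"
    by blast
  then show ?thesis
  proof cases
    case 1
    with ne show ?thesis using comm_hubbard_pairing_other_right_partner[OF b s0] by simp
  next
    case 2
    then have "single_fermion (q ! 0)"
      using factor_at_probe_first_sites(1) by (cases s0) (auto simp: left_partner_def single_fermion_def)
    with 2 others b show ?thesis
      using comm_hubbard_pairing_single_left_partner[OF b s0 2 _ second]
      by (cases "single_fermion (es ! 0)") (auto simp: left_partner_def)
  next
    case 3
    then show ?thesis using comm_hubbard_pairing_no_partner[OF b s0] by simp
  qed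
qed

theorem coeff_vanishes:
  assumes comm: "commutes L (local_sum L k c) (hubbard L Ur)"
    and second: "single_fermion (q ! 0) \<Longrightarrow> q ! 1 \<noteq> (Im, Im)"
    and others: "single_fermion (q ! 0) \<Longrightarrow>
      \<forall>j<L. \<forall>es\<in>supp_elems k. \<not> single_fermion (es ! 0) \<longrightarrow> c j es = 0"
  shows "c i q = 0"
proof -
  obtain s0 where "at_spin s0 (q ! 0) \<noteq> Im"
    using supp_elems_first_last(1)[OF q] pair_eq_Im_Im_iff by blast
  then have s0: "factor_at probe (mode L i s0) \<noteq> Im" using factor_at_probe_first_sites by simp
  let ?\<Gamma> = "\<lambda>j es. comm_hubbard_pairing L Ur (word_op probe) (basis_word L j es)"
  have "c j es * ?\<Gamma> j es = (if l = k \<and> j = i \<and> es = q then c i q * ?\<Gamma> i q else 0)"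
    if b: "l \<in> {1..k}" "j < L" "es \<in> supp_elems l" for l j es
    using coeff_pairing_vanishes_off_q[OF b s0 _ second others] by auto
  then have "0 = (\<Sum>l\<in>{1..k}. \<Sum>j<L. \<Sum>es\<in>supp_elems l.
      if l = k \<and> j = i \<and> es = q then c i q * ?\<Gamma> i q else 0)"
    using commutes_hubbard_pairing[OF L_pos comm, where X = "word_op probe"] by simp
  also have "\<dots> = c i q * ?\<Gamma> i q"
    by (rule sum_nested_single) (use ring q finite_supp_elems in auto)
  finally show ?thesis using comm_hubbard_pairing_q_nonzero by simp
qed

end

lemma probe_setup_exists:
  assumes "2 * k + 2 \<le> L" "3 \<le> k" "i < L" "q \<in> supp_elems k"
  obtains \<sigma> U V e where "probe_setup L k i q \<sigma> U V e"
proof -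
  obtain \<sigma> where \<sigma>: "at_spin \<sigma> (q ! (k - 1)) \<noteq> Im"
    using supp_elems_first_last(2)[OF assms(4)] pair_eq_Im_Im_iff by blast
  have "factor_at (basis_word L i q) (mode L (i + (k - 1)) \<sigma>) = at_spin \<sigma> (q ! (k - 1))"
    using factor_at_basis_word[of "k - 1" q L i \<sigma>] supp_elems_length[OF assms(4)] assms(1,2) by simp
  then obtain U V where "basis_word L i q = U @ [(mode L (i + (k - 1)) \<sigma>, at_spin \<sigma> (q ! (k - 1)))] @ V"
    using split_at_factor \<sigma> by metis
  with assms \<sigma> show thesis using that[of \<sigma> U V] by (simp add: probe_setup_def)
qed

lemma coeff_vanishes_if_not_single_fermion:
  assumes "2 * k + 2 \<le> L" "3 \<le> k" "i < L" "q \<in> supp_elems k"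
    and "commutes L (local_sum L k c) (hubbard L U)" "\<not> single_fermion (q ! 0)"
  shows "c i q = 0"
  using probe_setup_exists[OF assms(1-4)] probe_setup.coeff_vanishes assms(5,6) by metis

theorem lemma3:
  fixes L k :: nat and U :: real and c :: "nat \<Rightarrow> (loc \<times> loc) list \<Rightarrow> complex"
  assumes "U \<noteq> 0"
    and "3 \<le> k" and "k < L div 2"
    and "k_local_conserved L U k c"
    and "i < L" and "q \<in> supp_elems k" and "q ! 1 \<noteq> (Im, Im)"
  shows "c i q = 0"
proof -
  have ring: "2 * k + 2 \<le> L" using assms(3) by linarith
  have comm: "commutes L (local_sum L k c) (hubbard L U)"
    using assms(4) by (simp add: k_local_conserved_def)
  have "\<forall>j<L. \<forall>es\<in>supp_elems k. \<not> single_fermion (es ! 0) \<longrightarrow> c j es = 0"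
    using coeff_vanishes_if_not_single_fermion[OF ring assms(2) _ _ comm] by blast
  moreover obtain \<sigma> W W' e where "probe_setup L k i q \<sigma> W W' e"
    using probe_setup_exists[OF ring assms(2,5,6)] .
  ultimately show ?thesis using probe_setup.coeff_vanishes comm assms(7) by blast
qed

end
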